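(* Let $r\ge1$ be an integer, $\nu$ fixed with $\Re(\nu)>-\frac1{r+1}$, $0<b$, $f\in C^\infty[0,b]$, $g(x)=x^{r+1}$, $\mathcal{H}_\nu[f]=\int_0^bf(x)J_\nu(\omega x^{r+1})\,dx$, $M_j(0,\nu,\omega)=\int_0^bx^jJ_\nu(\omega x^{r+1})\,dx$, $T_r[\phi](x,y)=\sum_{j=0}^r\frac{\phi^{(j)}(y)}{j!}(x-y)^j$, and $\widehat\sigma_0[f]=f$, $\widehat\sigma_k[f](x)=g(x)^{\nu+k}\frac{d}{dx}\left[\frac{\widehat\sigma_{k-1}[f](x)-T_r[\widehat\sigma_{k-1}[f]](x,0)}{g(x)^{\nu+k}g'(x)}\right]$ for $k\ge1$ (values at $0$ by continuous extension). Then, as $\omega\to\infty$, $$\mathcal{H}_\nu[f]\sim\sum_{k=0}^\infty\frac{1}{(-\omega)^k}\sum_{j=0}^r\frac{\widehat\sigma_k[f]^{(j)}(0)}{j!}M_j(0,\nu+k,\omega)-\sum_{k=1}^\infty\frac{1}{(-\omega)^k}\Big[\widehat\sigma_{k-1}[f](b)-T_r[\widehat\sigma_{k-1}[f]](b,0)\Big]\frac{J_{\nu+k}(\omega b^{r+1})}{(r+1)b^r}.$$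
   Context: $J_\nu$ is the Bessel function of the first kind of order $\nu$; $\sim$ denotes an asymptotic expansion as $\omega\to\infty$. *)

theory Defs
  imports "HOL-Analysis.Analysis" "HOL-Library.Landau_Symbols"
begin

definition Cinf_on_interval :: "real \<Rightarrow> real \<Rightarrow> (real \<Rightarrow> 'a::real_normed_vector) \<Rightarrow> bool" where
  "Cinf_on_interval a b f \<longleftrightarrow>
     (\<exists>Df :: nat \<Rightarrow> real \<Rightarrow> 'a.
        (\<forall>x\<in>{a..b}. Df 0 x = f x) \<and>
        (\<forall>n. continuous_on {a..b} (Df n)) \<and>
        (\<forall>n. \<forall>x\<in>{a..b}. (Df n has_vector_derivative Df (Suc n) x) (at x within {a..b})))"

definition bessel_J :: "complex \<Rightarrow> real \<Rightarrow> complex" where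
  "bessel_J \<nu> t = (\<Sum>m. (-1) ^ m * rGamma (of_nat m + \<nu> + 1) / fact m
                        * (complex_of_real (t / 2)) powr (2 * of_nat m + \<nu>))"

definition dI :: "real \<Rightarrow> (real \<Rightarrow> complex) \<Rightarrow> real \<Rightarrow> complex" where
  "dI b \<phi> x = vector_derivative \<phi> (at x within {0..b})"

definition taylorT :: "nat \<Rightarrow> real \<Rightarrow> (real \<Rightarrow> complex) \<Rightarrow> real \<Rightarrow> real \<Rightarrow> complex" where
  "taylorT r b \<phi> x y = (\<Sum>j\<le>r. (dI b ^^ j) \<phi> y / fact j * complex_of_real ((x - y) ^ j))"

definition gpow :: "nat \<Rightarrow> real \<Rightarrow> complex \<Rightarrow> complex" where
  "gpow r x s = complex_of_real (x ^ (r + 1)) powr s"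

primrec sigma_hat :: "nat \<Rightarrow> complex \<Rightarrow> real \<Rightarrow> (real \<Rightarrow> complex) \<Rightarrow> nat \<Rightarrow> real \<Rightarrow> complex" where
  "sigma_hat r \<nu> b \<phi> 0 = \<phi>"
| "sigma_hat r \<nu> b \<phi> (Suc k) =
     (let s = sigma_hat r \<nu> b \<phi> k;
          e = \<nu> + of_nat (Suc k);
          h = (\<lambda>x. (s x - taylorT r b s x 0) / (gpow r x e * complex_of_real (real (r + 1) * x ^ r)));
          u = (\<lambda>x. gpow r x e * dI b h x)
      in (\<lambda>x. if x = 0 then Lim (at_right 0) u else u x))"

definition hankelH :: "nat \<Rightarrow> real \<Rightarrow> complex \<Rightarrow> (real \<Rightarrow> complex) \<Rightarrow> real \<Rightarrow> complex" where
  "hankelH r b \<nu> f \<omega> = integral {0..b} (\<lambda>x. f x * bessel_J \<nu> (\<omega> * x ^ (r + 1)))"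

definition momentM :: "nat \<Rightarrow> real \<Rightarrow> nat \<Rightarrow> complex \<Rightarrow> real \<Rightarrow> complex" where
  "momentM r b j \<nu> \<omega> = integral {0..b} (\<lambda>x. complex_of_real (x ^ j) * bessel_J \<nu> (\<omega> * x ^ (r + 1)))"

end

theory Submission
  imports Defs
begin

text \<open>Subtracting from \<open>\<sigma>\<^sub>k\<close> its Taylor polynomial of degree \<open>r\<close> at \<open>0\<close> leaves \<open>x\<^sup>r\<^sup>+\<^sup>1 G\<^sub>k(x)\<close>
  with \<open>G\<^sub>k\<close> smooth (Hadamard's lemma). The Taylor polynomial contributes the moment terms, and
  by the Bessel recurrence \<open>x\<^sup>r\<^sup>+\<^sup>1 G\<^sub>k J\<^sub>\<nu>\<^sub>+\<^sub>k(\<omega> x\<^sup>r\<^sup>+\<^sup>1)\<close> is \<open>1/\<omega>\<close> times the derivative of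
  \<open>x G\<^sub>k J\<^sub>\<nu>\<^sub>+\<^sub>k\<^sub>+\<^sub>1(\<omega> x\<^sup>r\<^sup>+\<^sup>1) / (r+1)\<close> minus \<open>\<sigma>\<^sub>k\<^sub>+\<^sub>1 J\<^sub>\<nu>\<^sub>+\<^sub>k\<^sub>+\<^sub>1(\<omega> x\<^sup>r\<^sup>+\<^sup>1)\<close>. Integrating
  by parts thus produces the boundary term at \<open>b\<close> and the same problem for \<open>\<sigma>\<^sub>k\<^sub>+\<^sub>1\<close> and
  \<open>\<nu> + k + 1\<close>, with a factor \<open>-1/\<omega>\<close>. After \<open>N + 1\<close> steps the remainder is \<open>\<omega>\<^sup>-\<^sup>N\<^sup>-\<^sup>1\<close> times
  quantities bounded in \<open>\<omega>\<close>, because \<open>J\<^sub>\<mu>\<close> is bounded on \<open>[0, \<infinity>)\<close> when \<open>Re \<mu> \<ge> 0\<close>: near \<open>0\<close> by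
  its power series, near \<open>\<infinity>\<close> by an energy estimate for \<open>\<surd>t J\<^sub>\<mu>(t)\<close>.\<close>

section \<open>Bessel functions of the first kind\<close>

definition bessel_coeff :: "complex \<Rightarrow> nat \<Rightarrow> complex" where
  "bessel_coeff \<mu> m = (-1) ^ m * rGamma (of_nat m + \<mu> + 1) / fact m"

definition bessel_series :: "complex \<Rightarrow> complex \<Rightarrow> complex" where
  "bessel_series \<mu> z = (\<Sum>m. bessel_coeff \<mu> m * z ^ m)"

definition bessel_Jc :: "complex \<Rightarrow> complex \<Rightarrow> complex" where
  "bessel_Jc \<mu> z = (z / 2) powr \<mu> * bessel_series \<mu> ((z / 2)\<^sup>2)"

lemma one_plus_of_nat_neq_0: "(1 + of_nat m :: complex) \<noteq> 0"
  by (metis of_nat_Suc of_nat_neq_0)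

lemma bessel_coeff_shift: "bessel_coeff \<mu> m = (of_nat m + \<mu> + 1) * bessel_coeff (\<mu> + 1) m"
  using rGamma_plus1[of "of_nat m + \<mu> + 1"] by (simp add: bessel_coeff_def add.assoc)

lemma bessel_coeff_Suc: "bessel_coeff \<mu> (Suc m) = - bessel_coeff (\<mu> + 1) m / of_nat (Suc m)"
proof -
  have "of_nat (Suc m) + \<mu> + 1 = of_nat m + (\<mu> + 1) + 1" by simp
  then show ?thesis by (simp add: bessel_coeff_def mult.commute del: of_nat_Suc)
qed

lemma diffs_bessel_coeff: "diffs (bessel_coeff \<mu>) = (\<lambda>m. - bessel_coeff (\<mu> + 1) m)"
  by (simp add: diffs_def bessel_coeff_Suc del: of_nat_Suc)

text \<open>Ratio test: the ratio of consecutive terms is \<open>- z / ((m + \<mu> + 1)(m + 1)) \<rightarrow> 0\<close>.\<close>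
lemma summable_bessel_series: "summable (\<lambda>m. bessel_coeff \<mu> m * z ^ m)"
proof -
  obtain N :: nat where N: "real N \<ge> 2 * cmod \<mu> + 2 * cmod z + 2"
    using real_arch_simple by blast
  show ?thesis
  proof (rule summable_ratio_test[where c = "1/2" and N = N])
    fix n assume "n \<ge> N"
    then have n: "real n \<ge> 2 * cmod \<mu> + 2 * cmod z + 2" using N by linarith
    have "real n + 1 = cmod (of_nat (Suc n) :: complex)" by (simp only: norm_of_nat)
    also have "\<dots> = cmod (of_nat n + \<mu> + 1 - \<mu>)" by (simp add: add.commute)
    also have "\<dots> \<le> cmod (of_nat n + \<mu> + 1) + cmod \<mu>" by (rule norm_triangle_ineq4)
    finally have A: "cmod (of_nat n + \<mu> + 1) \<ge> 2 * cmod z + 1" using n norm_ge_zero[of \<mu>] by linarith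
    then have "cmod (of_nat n + \<mu> + 1) > 0" using norm_ge_zero[of z] by linarith
    then have nz: "of_nat n + \<mu> + 1 \<noteq> 0" by auto
    have "bessel_coeff (\<mu> + 1) n = bessel_coeff \<mu> n / (of_nat n + \<mu> + 1)"
      using bessel_coeff_shift[of \<mu> n] nz by (simp add: nonzero_eq_divide_eq mult.commute)
    then have "bessel_coeff \<mu> (Suc n) = - bessel_coeff \<mu> n / ((of_nat n + \<mu> + 1) * of_nat (Suc n))"
      unfolding bessel_coeff_Suc by (simp del: of_nat_Suc)
    then have "cmod (bessel_coeff \<mu> (Suc n) * z ^ Suc n)
        = cmod (bessel_coeff \<mu> n * z ^ n) * (cmod z / (cmod (of_nat n + \<mu> + 1) * (real n + 1)))"
      by (simp add: norm_mult norm_divide norm_power norm_of_nat mult_ac del: of_nat_Suc)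
    also have "\<dots> \<le> cmod (bessel_coeff \<mu> n * z ^ n) * (1/2)"
    proof (rule mult_left_mono)
      have "cmod (of_nat n + \<mu> + 1) \<le> cmod (of_nat n + \<mu> + 1) * (real n + 1)"
        using A by (simp add: mult_le_cancel_left1)
      moreover have "0 < cmod (of_nat n + \<mu> + 1) * (real n + 1)"
        using A norm_ge_zero[of z] by (intro mult_pos_pos) linarith+
      ultimately show "cmod z / (cmod (of_nat n + \<mu> + 1) * (real n + 1)) \<le> 1/2"
        using A by (simp add: divide_le_eq)
    qed simp
    finally show "cmod (bessel_coeff \<mu> (Suc n) * z ^ Suc n) \<le> 1/2 * cmod (bessel_coeff \<mu> n * z ^ n)"
      by simp
  qed simp
qed

lemma bessel_series_has_field_derivative:
  "(bessel_series \<mu> has_field_derivative - bessel_series (\<mu> + 1) z) (at z)"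
proof -
  have "((\<lambda>x. \<Sum>n. bessel_coeff \<mu> n * x ^ n) has_field_derivative
      (\<Sum>n. diffs (bessel_coeff \<mu>) n * z ^ n)) (at z)"
    by (rule termdiffs_strong_converges_everywhere[OF summable_bessel_series])
  moreover have "(\<Sum>n. diffs (bessel_coeff \<mu>) n * z ^ n) = - bessel_series (\<mu> + 1) z"
    unfolding diffs_bessel_coeff bessel_series_def
    using suminf_minus[OF summable_bessel_series[of "\<mu> + 1" z]] by simp
  ultimately show ?thesis unfolding bessel_series_def[abs_def] by simp
qed

lemma bessel_series_recurrence:
  "bessel_series \<mu> z = (\<mu> + 1) * bessel_series (\<mu> + 1) z - z * bessel_series (\<mu> + 2) z"
proof -
  have sums: "(\<lambda>m. bessel_coeff \<mu> m * z ^ m) sums bessel_series \<mu> z" for \<mu>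
    unfolding bessel_series_def by (rule summable_sums[OF summable_bessel_series])
  define g where "g m = of_nat m * bessel_coeff (\<mu> + 1) m * z ^ m" for m
  have "(\<lambda>n. g (Suc n)) = (\<lambda>n. - z * (bessel_coeff (\<mu> + 2) n * z ^ n))"
  proof
    fix n
    show "g (Suc n) = - z * (bessel_coeff (\<mu> + 2) n * z ^ n)"
      using bessel_coeff_Suc[of "\<mu> + 1" n] one_plus_of_nat_neq_0[of n]
      unfolding g_def by (simp add: field_simps add_ac)
  qed
  then have "g sums (- z * bessel_series (\<mu> + 2) z)"
    using sums_Suc_iff[of g] sums_mult[OF sums[of "\<mu> + 2"], of "- z"] by (simp add: g_def)
  from sums_add[OF sums_mult[OF sums[of "\<mu> + 1"], of "\<mu> + 1"] this]
  have "(\<lambda>m. (\<mu> + 1) * (bessel_coeff (\<mu> + 1) m * z ^ m) + g m) sums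
      ((\<mu> + 1) * bessel_series (\<mu> + 1) z - z * bessel_series (\<mu> + 2) z)"
    by simp
  moreover have "(\<lambda>m. (\<mu> + 1) * (bessel_coeff (\<mu> + 1) m * z ^ m) + g m)
      = (\<lambda>m. bessel_coeff \<mu> m * z ^ m)"
    by (rule ext) (simp add: g_def bessel_coeff_shift[of \<mu>] field_simps)
  ultimately show ?thesis using sums[of \<mu>] sums_unique2 by simp
qed

lemma bessel_J_eq_bessel_Jc:
  assumes "t > 0"
  shows "bessel_J \<mu> t = bessel_Jc \<mu> (of_real t)"
proof -
  define w where "w = complex_of_real (t / 2)"
  have "w \<noteq> 0" using assms by (simp add: w_def)
  then have powr_split: "w powr (2 * of_nat m + \<mu>) = w powr \<mu> * (w\<^sup>2) ^ m" for m
    using powr_nat'[of w "2 * m"] by (simp add: powr_add power_mult)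
  have "bessel_J \<mu> t = (\<Sum>m. w powr \<mu> * (bessel_coeff \<mu> m * (w\<^sup>2) ^ m))"
    unfolding bessel_J_def w_def[symmetric] powr_split by (simp add: bessel_coeff_def mult_ac)
  also have "\<dots> = w powr \<mu> * bessel_series \<mu> (w\<^sup>2)"
    unfolding bessel_series_def by (rule suminf_mult[OF summable_bessel_series])
  finally show ?thesis by (simp add: bessel_Jc_def w_def)
qed

lemma bessel_J_0 [simp]: "bessel_J \<mu> 0 = 0"
  by (simp add: bessel_J_def)

lemma bessel_Jc_has_field_derivative:
  assumes z: "Re z > 0"
  shows "(bessel_Jc \<mu> has_field_derivative (\<mu> / z * bessel_Jc \<mu> z - bessel_Jc (\<mu> + 1) z)) (at z)"
proof -
  have z0: "z \<noteq> 0" using z by auto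
  have nonpos: "z / 2 \<notin> \<real>\<^sub>\<le>\<^sub>0" using z by (auto simp: complex_nonpos_Reals_iff)
  have half: "((\<lambda>z. z / 2) has_field_derivative 1 / 2) (at z)"
    by (auto intro!: derivative_eq_intros)
  have square: "((\<lambda>z. (z / 2)\<^sup>2) has_field_derivative z / 2) (at z)"
    by (auto intro!: derivative_eq_intros simp: power2_eq_square)
  have "(bessel_Jc \<mu> has_field_derivative
      (\<mu> * (z/2) powr (\<mu> - 1) * (1/2)) * bessel_series \<mu> ((z/2)\<^sup>2)
       + (- bessel_series (\<mu> + 1) ((z/2)\<^sup>2) * (z/2)) * (z/2) powr \<mu>) (at z)"
    unfolding bessel_Jc_def[abs_def]
    by (rule DERIV_mult DERIV_chain2[OF has_field_derivative_powr[OF nonpos] half]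
        DERIV_chain2[OF bessel_series_has_field_derivative square])+
  moreover have powr_pred: "(z/2) powr (\<mu> - 1) = (z/2) powr \<mu> / (z/2)"
    and powr_succ: "(z/2) powr (\<mu> + 1) = (z/2) powr \<mu> * (z/2)"
    using z0 by (simp_all add: powr_diff powr_add)
  have "(\<mu> * (z/2) powr (\<mu> - 1) * (1/2)) * bessel_series \<mu> ((z/2)\<^sup>2)
       + (- bessel_series (\<mu> + 1) ((z/2)\<^sup>2) * (z/2)) * (z/2) powr \<mu>
      = \<mu> / z * bessel_Jc \<mu> z - bessel_Jc (\<mu> + 1) z"
    unfolding bessel_Jc_def powr_pred powr_succ using z0 by (simp add: field_simps)
  ultimately show ?thesis by simp
qed

lemma bessel_Jc_recurrence:
  assumes z0: "z \<noteq> 0"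
  shows "bessel_Jc \<mu> z + bessel_Jc (\<mu> + 2) z = 2 * (\<mu> + 1) / z * bessel_Jc (\<mu> + 1) z"
proof -
  have powr_succ: "(z/2) powr (\<mu> + 1) = (z/2) powr \<mu> * (z/2)"
    using z0 by (simp add: powr_add)
  have "(z/2) powr (\<mu> + 2) = (z/2) powr \<mu> * (z/2) powr (of_nat 2)"
    by (simp add: powr_add)
  then have powr_succ2: "(z/2) powr (\<mu> + 2) = (z/2) powr \<mu> * (z/2)\<^sup>2"
    using z0 by (simp add: powr_nat')
  show ?thesis
    unfolding bessel_Jc_def powr_succ powr_succ2 bessel_series_recurrence[of \<mu> "(z/2)\<^sup>2"]
    using z0 by (simp add: field_simps power2_eq_square)
qed

lemma bessel_Jc_Suc_has_field_derivative:
  assumes z: "Re z > 0"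
  shows "(bessel_Jc (\<mu> + 1) has_field_derivative
      (bessel_Jc \<mu> z - (\<mu> + 1) / z * bessel_Jc (\<mu> + 1) z)) (at z)"
proof -
  have "z \<noteq> 0" using z by auto
  then have "bessel_Jc (\<mu> + 1 + 1) z = 2 * (\<mu> + 1) / z * bessel_Jc (\<mu> + 1) z - bessel_Jc \<mu> z"
    using bessel_Jc_recurrence[of z \<mu>] by (simp add: add.assoc eq_diff_eq add.commute)
  then have eq: "(\<mu> + 1) / z * bessel_Jc (\<mu> + 1) z - bessel_Jc (\<mu> + 1 + 1) z
      = bessel_Jc \<mu> z - (\<mu> + 1) / z * bessel_Jc (\<mu> + 1) z"
    by (simp add: algebra_simps)
  from bessel_Jc_has_field_derivative[OF z, of "\<mu> + 1"] show ?thesis unfolding eq .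
qed

lemma bessel_J_has_vector_derivative:
  assumes t: "t > 0"
  shows "(bessel_J \<mu> has_vector_derivative (\<mu> / of_real t * bessel_J \<mu> t - bessel_J (\<mu> + 1) t)) (at t)"
proof -
  have "((\<lambda>x. bessel_Jc \<mu> (of_real x)) has_vector_derivative
      (\<mu> / of_real t * bessel_Jc \<mu> (of_real t) - bessel_Jc (\<mu> + 1) (of_real t))) (at t)"
    using has_vector_derivative_real_field[OF bessel_Jc_has_field_derivative, of t \<mu> UNIV] t by simp
  then show ?thesis
    using has_vector_derivative_transform_within_open[of "\<lambda>x. bessel_Jc \<mu> (of_real x)" _ t "{0<..}"]
      t bessel_J_eq_bessel_Jc by auto
qed

lemma bessel_J_Suc_has_vector_derivative:
  assumes t: "t > 0"
  shows "(bessel_J (\<mu> + 1) has_vector_derivative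
      (bessel_J \<mu> t - (\<mu> + 1) / of_real t * bessel_J (\<mu> + 1) t)) (at t)"
proof -
  have "((\<lambda>x. bessel_Jc (\<mu> + 1) (of_real x)) has_vector_derivative
      (bessel_Jc \<mu> (of_real t) - (\<mu> + 1) / of_real t * bessel_Jc (\<mu> + 1) (of_real t))) (at t)"
    using has_vector_derivative_real_field[OF bessel_Jc_Suc_has_field_derivative, of t \<mu> UNIV] t
    by simp
  then show ?thesis
    using has_vector_derivative_transform_within_open[of "\<lambda>x. bessel_Jc (\<mu> + 1) (of_real x)" _ t "{0<..}"]
      t bessel_J_eq_bessel_Jc by auto
qed

lemma bessel_J_bound_near_0:
  assumes "T > 0"
  obtains K where "K \<ge> 0" "\<And>t. 0 < t \<Longrightarrow> t \<le> T \<Longrightarrow> cmod (bessel_J \<mu> t) \<le> K * (t/2) powr Re \<mu>"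
proof -
  have "continuous_on (cball 0 ((T/2)\<^sup>2)) (bessel_series \<mu>)"
    using bessel_series_has_field_derivative
    by (meson DERIV_isCont continuous_at_imp_continuous_on)
  then obtain K where K: "K \<ge> 0" "\<And>z. z \<in> cball 0 ((T/2)\<^sup>2) \<Longrightarrow> cmod (bessel_series \<mu> z) \<le> K"
    using continuous_on_compact_bound[OF compact_cball] by blast
  show ?thesis
  proof (rule that[OF K(1)])
    fix t assume t: "0 < t" "t \<le> T"
    have "cmod (bessel_J \<mu> t) = (t/2) powr Re \<mu> * cmod (bessel_series \<mu> ((of_real (t/2))\<^sup>2))"
      using bessel_J_eq_bessel_Jc[of t \<mu>] t by (simp add: bessel_Jc_def norm_mult norm_powr_real_powr)
    also have "\<dots> \<le> (t/2) powr Re \<mu> * K"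
      using t by (intro mult_left_mono K(2)) (auto simp: norm_power intro!: power_mono)
    finally show "cmod (bessel_J \<mu> t) \<le> K * (t/2) powr Re \<mu>" by (simp add: mult.commute)
  qed
qed

text \<open>The energy \<open>|w|\<^sup>2 + |w'|\<^sup>2\<close> of a solution of \<open>w'' = (c/t\<^sup>2 - 1) w\<close> satisfies
  \<open>E' \<le> |c| E / t\<^sup>2\<close>, so \<open>E(t) exp(|c|/t)\<close> is nonincreasing.\<close>
lemma perturbed_oscillator_bounded:
  fixes w W :: "real \<Rightarrow> complex" and c :: complex
  assumes dw: "\<And>t. t > 0 \<Longrightarrow> (w has_vector_derivative W t) (at t)"
    and dW: "\<And>t. t > 0 \<Longrightarrow> (W has_vector_derivative (- w t + c * w t / (of_real t)\<^sup>2)) (at t)"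
  shows "\<exists>C. \<forall>t\<ge>1. cmod (w t) \<le> C"
proof -
  define E where "E t = Re (w t * cnj (w t)) + Re (W t * cnj (W t))" for t
  have E_norm: "E t = (cmod (w t))\<^sup>2 + (cmod (W t))\<^sup>2" for t
    unfolding E_def complex_norm_square[symmetric] Re_complex_of_real ..
  define X where "X t = w t * cnj (W t) + W t * cnj (w t) + (W t * cnj (- w t + c * w t / (of_real t)\<^sup>2)
       + (- w t + c * w t / (of_real t)\<^sup>2) * cnj (W t))" for t
  have dE: "(E has_real_derivative Re (X t)) (at t)" if t: "t > 0" for t
  proof -
    have "((\<lambda>t. w t * cnj (w t) + W t * cnj (W t)) has_vector_derivative X t) (at t)"
      unfolding X_def by (rule derivative_eq_intros dw[OF t] dW[OF t] refl | simp)+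
    from bounded_linear.has_vector_derivative[OF bounded_linear_Re this]
    show ?thesis unfolding has_real_derivative_iff_has_vector_derivative E_def by simp
  qed
  have X_le: "Re (X t) \<le> cmod c * E t / t\<^sup>2" if t: "t > 0" for t
  proof -
    have X_eq: "X t = (W t * cnj (c * w t) + c * w t * cnj (W t)) / (of_real t)\<^sup>2"
      unfolding X_def using t by (simp add: field_simps)
    have "Re (X t) \<le> cmod (X t)" by (rule complex_Re_le_cmod)
    also have "\<dots> \<le> (cmod (W t) * (cmod c * cmod (w t)) + cmod c * cmod (w t) * cmod (W t)) / t\<^sup>2"
      unfolding X_eq using t
      by (simp add: norm_divide norm_mult norm_power divide_right_mono norm_triangle_ineq[THEN order_trans])
    also have "\<dots> \<le> cmod c * E t / t\<^sup>2"
    proof (rule divide_right_mono)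
      have "2 * (cmod (W t) * cmod (w t)) \<le> (cmod (w t))\<^sup>2 + (cmod (W t))\<^sup>2"
        using sum_squares_bound[of "cmod (W t)" "cmod (w t)"] by (simp add: algebra_simps)
      then show "cmod (W t) * (cmod c * cmod (w t)) + cmod c * cmod (w t) * cmod (W t) \<le> cmod c * E t"
        unfolding E_norm by (smt (verit, best) mult.commute mult.left_commute mult_left_mono norm_ge_zero distrib_left)
    qed simp
    finally show ?thesis .
  qed
  define \<phi> where "\<phi> t = E t * exp (cmod c / t)" for t
  have \<phi>_decreasing: "\<phi> T \<le> \<phi> 1" if T: "T \<ge> 1" for T
  proof (rule DERIV_nonpos_imp_nonincreasing[OF T])
    fix t :: real assume "1 \<le> t"
    then have t: "t > 0" by simp
    have "(\<phi> has_real_derivative (Re (X t) - cmod c * E t / t\<^sup>2) * exp (cmod c / t)) (at t)"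
      unfolding \<phi>_def[abs_def] using t
      by (auto intro!: derivative_eq_intros dE simp: power2_eq_square field_simps)
    moreover have "(Re (X t) - cmod c * E t / t\<^sup>2) * exp (cmod c / t) \<le> 0"
      using X_le[OF t] by (simp add: mult_nonpos_nonneg)
    ultimately show "\<exists>y. (\<phi> has_real_derivative y) (at t) \<and> y \<le> 0" by blast
  qed
  have "cmod (w T) \<le> sqrt (\<phi> 1)" if T: "T \<ge> 1" for T
  proof -
    have "(cmod (w T))\<^sup>2 \<le> E T" unfolding E_norm by simp
    also have "\<dots> \<le> \<phi> T"
    proof -
      have "E T \<ge> 0" "1 \<le> exp (cmod c / T)" using T by (simp_all add: E_norm)
      then show ?thesis unfolding \<phi>_def using mult_left_mono[of 1 "exp (cmod c / T)" "E T"] by simp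
    qed
    also have "\<dots> \<le> \<phi> 1" by (rule \<phi>_decreasing[OF T])
    finally show ?thesis by (simp add: real_le_rsqrt)
  qed
  then show ?thesis by blast
qed

lemma has_vector_derivative_complex_sqrt:
  assumes "t > 0"
  shows "((\<lambda>t. complex_of_real (sqrt t)) has_vector_derivative 1 / (2 * complex_of_real (sqrt t))) (at t)"
proof -
  have "((\<lambda>x. complex_of_real (sqrt x)) has_vector_derivative complex_of_real (inverse (sqrt t) / 2)) (at t)"
    by (rule has_vector_derivative_of_real[OF DERIV_real_sqrt[OF assms]])
  moreover have "complex_of_real (inverse (sqrt t) / 2) = 1 / (2 * complex_of_real (sqrt t))"
    by (simp add: inverse_eq_divide)
  ultimately show ?thesis by (simp only:)
qed

lemma has_vector_derivative_complex_inverse_sqrt: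
  assumes t: "t > 0"
  shows "((\<lambda>t. complex_of_real (inverse (sqrt t))) has_vector_derivative
      - complex_of_real (inverse (sqrt t)) / (2 * of_real t)) (at t)"
proof -
  have "sqrt t \<noteq> 0" using t by simp
  from DERIV_inverse_fun[OF DERIV_real_sqrt[OF t] this]
  have "((\<lambda>x. inverse (sqrt x)) has_real_derivative
      - (inverse (sqrt t) / 2 * inverse (sqrt t ^ Suc (Suc 0)))) (at t)" .
  moreover have "- (inverse (sqrt t) / 2 * inverse (sqrt t ^ Suc (Suc 0))) = - inverse (sqrt t) / (2 * t)"
  proof -
    have "sqrt t ^ Suc (Suc 0) = t" using t by (simp add: numeral_2_eq_2[symmetric])
    then show ?thesis by (simp, metis divide_inverse)
  qed
  ultimately have "((\<lambda>x. inverse (sqrt x)) has_real_derivative - inverse (sqrt t) / (2 * t)) (at t)"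
    by metis
  then have "((\<lambda>x. complex_of_real (inverse (sqrt x))) has_vector_derivative
      complex_of_real (- inverse (sqrt t) / (2 * t))) (at t)"
    by (rule has_vector_derivative_of_real)
  moreover have "complex_of_real (- inverse (sqrt t) / (2 * t))
      = - complex_of_real (inverse (sqrt t)) / (2 * of_real t)"
    by simp
  ultimately show ?thesis by (simp only:)
qed

text \<open>\<open>w = \<surd>t J\<^sub>\<mu>(t)\<close> solves \<open>w'' = ((\<mu>\<^sup>2 - 1/4)/t\<^sup>2 - 1) w\<close>.\<close>
lemma bessel_J_bounded_at_top: "\<exists>C. \<forall>t\<ge>1. cmod (bessel_J \<mu> t) \<le> C"
proof -
  define u where "u = bessel_J \<mu>"
  define v where "v = bessel_J (\<mu> + 1)"
  define sq where "sq t = complex_of_real (sqrt t)" for t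
  define isq where "isq t = complex_of_real (inverse (sqrt t))" for t
  define w where "w t = sq t * u t" for t
  define W where "W t = - sq t * v t + (\<mu> + 1/2) * u t * isq t" for t
  have du: "(u has_vector_derivative (\<mu> / of_real t * u t - v t)) (at t)" if "t > 0" for t
    unfolding u_def v_def by (rule bessel_J_has_vector_derivative[OF that])
  have dv: "(v has_vector_derivative (u t - (\<mu> + 1) / of_real t * v t)) (at t)" if "t > 0" for t
    unfolding u_def v_def by (rule bessel_J_Suc_has_vector_derivative[OF that])
  have sq_sq: "sq t * sq t = of_real t" and sq0: "sq t \<noteq> 0" if "t > 0" for t
    unfolding sq_def of_real_mult[symmetric] using that by simp_all
  have isq: "isq t = 1 / sq t" for t by (simp add: sq_def isq_def inverse_eq_divide)
  have dsq: "(sq has_vector_derivative 1 / (2 * sq t)) (at t)"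
    and disq: "(isq has_vector_derivative - isq t / (2 * of_real t)) (at t)" if "t > 0" for t
    unfolding sq_def[abs_def] isq_def[abs_def]
    using has_vector_derivative_complex_sqrt[OF that] has_vector_derivative_complex_inverse_sqrt[OF that]
    by simp_all
  have "(w has_vector_derivative W t) (at t)" if t: "t > 0" for t
  proof -
    have "(w has_vector_derivative (sq t * (\<mu> / of_real t * u t - v t) + 1 / (2 * sq t) * u t)) (at t)"
      unfolding w_def[abs_def] by (rule has_vector_derivative_mult[OF dsq[OF t] du[OF t]])
    moreover have "sq t * (\<mu> / of_real t * u t - v t) + 1 / (2 * sq t) * u t = W t"
      unfolding W_def isq sq_sq[OF t, symmetric] using sq0[OF t] by (simp add: field_simps)
    ultimately show ?thesis by simp
  qed
  moreover have "(W has_vector_derivative (- w t + (\<mu>\<^sup>2 - 1/4) * w t / (of_real t)\<^sup>2)) (at t)"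
    if t: "t > 0" for t
  proof -
    have "(W has_vector_derivative
        (- (sq t * (u t - (\<mu> + 1) / of_real t * v t) + 1 / (2 * sq t) * v t)
         + ((\<mu> + 1/2) * u t * (- isq t / (2 * of_real t))
            + (\<mu> + 1/2) * (\<mu> / of_real t * u t - v t) * isq t))) (at t)"
      unfolding W_def[abs_def]
      by (rule derivative_eq_intros dsq[OF t] du[OF t] dv[OF t] disq[OF t] refl | simp)+
    moreover have "- (sq t * (u t - (\<mu> + 1) / of_real t * v t) + 1 / (2 * sq t) * v t)
         + ((\<mu> + 1/2) * u t * (- isq t / (2 * of_real t))
            + (\<mu> + 1/2) * (\<mu> / of_real t * u t - v t) * isq t)
       = - w t + (\<mu>\<^sup>2 - 1/4) * w t / (of_real t)\<^sup>2"
      unfolding w_def isq sq_sq[OF t, symmetric] using sq0[OF t]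
      by (simp add: field_simps power2_eq_square)
    ultimately show ?thesis by simp
  qed
  ultimately obtain C where C: "\<And>t. t \<ge> 1 \<Longrightarrow> cmod (w t) \<le> C"
    using perturbed_oscillator_bounded[of w W] by blast
  have "cmod (u t) \<le> C" if t: "t \<ge> 1" for t
  proof -
    have "cmod (u t) \<le> sqrt t * cmod (u t)" using t by (simp add: mult_le_cancel_right1)
    also have "\<dots> = cmod (w t)" using t by (simp add: w_def sq_def norm_mult)
    finally show ?thesis using C[OF t] by simp
  qed
  then show ?thesis unfolding u_def by blast
qed

lemma bessel_J_bounded:
  assumes "Re \<mu> \<ge> 0"
  obtains C where "C \<ge> 0" "\<And>t. t \<ge> 0 \<Longrightarrow> cmod (bessel_J \<mu> t) \<le> C"
proof -
  obtain C1 where C1: "\<And>t. t \<ge> 1 \<Longrightarrow> cmod (bessel_J \<mu> t) \<le> C1"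
    using bessel_J_bounded_at_top by blast
  obtain K where K: "K \<ge> 0" "\<And>t. 0 < t \<Longrightarrow> t \<le> 1 \<Longrightarrow> cmod (bessel_J \<mu> t) \<le> K * (t/2) powr Re \<mu>"
    using bessel_J_bound_near_0[of 1] by auto
  show ?thesis
  proof (rule that)
    fix t :: real assume t: "t \<ge> 0"
    consider "t = 0" | "0 < t" "t \<le> 1" | "t \<ge> 1" using t by linarith
    then show "cmod (bessel_J \<mu> t) \<le> max C1 K"
    proof cases
      case 2
      have "(t/2) powr Re \<mu> \<le> 1" using 2 assms by (intro powr_le1) auto
      then have "K * (t/2) powr Re \<mu> \<le> K" using K(1) by (simp add: mult_left_le)
      then show ?thesis using K(2)[OF 2] by linarith
    qed (use C1 K in \<open>auto simp: le_max_iff_disj\<close>)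
  qed (use K in simp)
qed

section \<open>Smooth functions on \<open>[0, b]\<close>\<close>

definition derivs_on :: "real \<Rightarrow> (real \<Rightarrow> complex) \<Rightarrow> (nat \<Rightarrow> real \<Rightarrow> complex) \<Rightarrow> bool" where
  "derivs_on b \<phi> D \<longleftrightarrow> (\<forall>x\<in>{0..b}. D 0 x = \<phi> x) \<and>
     (\<forall>n. \<forall>x\<in>{0..b}. (D n has_vector_derivative D (Suc n) x) (at x within {0..b}))"

lemma derivs_onI:
  assumes "\<And>x. x \<in> {0..b} \<Longrightarrow> D 0 x = \<phi> x"
    and "\<And>n x. x \<in> {0..b} \<Longrightarrow> (D n has_vector_derivative D (Suc n) x) (at x within {0..b})"
  shows "derivs_on b \<phi> D"
  using assms unfolding derivs_on_def by blast

lemma derivs_on_0: "derivs_on b \<phi> D \<Longrightarrow> x \<in> {0..b} \<Longrightarrow> D 0 x = \<phi> x"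
  by (simp add: derivs_on_def)

lemma derivs_on_derivative:
  "derivs_on b \<phi> D \<Longrightarrow> x \<in> {0..b} \<Longrightarrow> (D n has_vector_derivative D (Suc n) x) (at x within {0..b})"
  by (simp add: derivs_on_def)

lemma derivs_on_continuous: "derivs_on b \<phi> D \<Longrightarrow> continuous_on {0..b} (D n)"
  unfolding continuous_on_eq_continuous_within
  using derivs_on_derivative has_vector_derivative_continuous by blast

lemma derivs_on_continuous_fun: "derivs_on b \<phi> D \<Longrightarrow> continuous_on {0..b} \<phi>"
  by (rule continuous_on_eq[OF derivs_on_continuous[of b \<phi> D 0]]) (auto simp: derivs_on_0)

lemma derivs_on_cong: "derivs_on b \<phi> D \<Longrightarrow> (\<And>x. x \<in> {0..b} \<Longrightarrow> \<phi> x = \<psi> x) \<Longrightarrow> derivs_on b \<psi> D"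
  by (simp add: derivs_on_def)

lemma derivs_on_has_vector_derivative_at:
  assumes D: "derivs_on b \<phi> D" and x: "x \<in> {0<..<b}"
  shows "(\<phi> has_vector_derivative D 1 x) (at x)"
proof -
  have "(D 0 has_vector_derivative D 1 x) (at x within {0<..<b})"
    using x by (intro has_vector_derivative_within_subset[OF derivs_on_derivative[OF D, of x 0,
          unfolded One_nat_def[symmetric]]]) auto
  then have "(\<phi> has_vector_derivative D 1 x) (at x within {0<..<b})"
    using has_vector_derivative_transform_within[of "D 0" _ x "{0<..<b}" 1 \<phi>] x derivs_on_0[OF D]
    by auto
  then show ?thesis using has_vector_derivative_within_open[of x "{0<..<b}"] x by auto
qed

lemma iterated_dI_eq:
  assumes b: "b > 0" and D: "derivs_on b \<phi> D" and x: "x \<in> {0..b}"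
  shows "(dI b ^^ n) \<phi> x = D n x"
  using x
proof (induction n arbitrary: x)
  case 0
  then show ?case using derivs_on_0[OF D] by simp
next
  case (Suc n)
  have "((dI b ^^ n) \<phi> has_vector_derivative D (Suc n) x) (at x within {0..b})"
    using has_vector_derivative_transform_within[OF derivs_on_derivative[OF D Suc.prems, of n]
        zero_less_one Suc.prems] Suc.IH by metis
  then have "vector_derivative ((dI b ^^ n) \<phi>) (at x within {0..b}) = D (Suc n) x"
    using vector_derivative_within_closed_interval[OF b Suc.prems] by blast
  then show ?case unfolding funpow.simps(2) o_apply dI_def[of b "(dI b ^^ n) \<phi>" x] .
qed

lemma derivs_on_add:
  assumes "derivs_on b \<phi> D" "derivs_on b \<psi> E"
  shows "derivs_on b (\<lambda>x. \<phi> x + \<psi> x) (\<lambda>n x. D n x + E n x)"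
  by (rule derivs_onI) (auto simp: derivs_on_0[OF assms(1)] derivs_on_0[OF assms(2)]
      intro!: has_vector_derivative_add derivs_on_derivative[OF assms(1)] derivs_on_derivative[OF assms(2)])

lemma derivs_on_diff:
  assumes "derivs_on b \<phi> D" "derivs_on b \<psi> E"
  shows "derivs_on b (\<lambda>x. \<phi> x - \<psi> x) (\<lambda>n x. D n x - E n x)"
  by (rule derivs_onI) (auto simp: derivs_on_0[OF assms(1)] derivs_on_0[OF assms(2)]
      intro!: has_vector_derivative_diff derivs_on_derivative[OF assms(1)] derivs_on_derivative[OF assms(2)])

lemma derivs_on_cmult:
  assumes "derivs_on b \<phi> D"
  shows "derivs_on b (\<lambda>x. c * \<phi> x) (\<lambda>n x. c * D n x)"
  by (rule derivs_onI) (auto simp: derivs_on_0[OF assms]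
      intro!: has_vector_derivative_mult_right derivs_on_derivative[OF assms])

lemma derivs_on_shift:
  assumes "derivs_on b \<phi> D"
  shows "derivs_on b (D 1) (\<lambda>n. D (Suc n))"
  by (rule derivs_onI) (auto intro!: derivs_on_derivative[OF assms])

text \<open>Leibniz rule for \<open>x \<phi>(x)\<close>; the summand for \<open>n = 0\<close> vanishes, whatever \<open>D (0 - 1)\<close> is.\<close>
lemma derivs_on_xmult:
  assumes D: "derivs_on b \<phi> D"
  shows "derivs_on b (\<lambda>x. of_real x * \<phi> x) (\<lambda>n x. of_real x * D n x + of_nat n * D (n - 1) x)"
proof (rule derivs_onI)
  fix x assume "x \<in> {0..b}"
  then show "of_real x * D 0 x + of_nat 0 * D (0 - 1) x = of_real x * \<phi> x"
    using derivs_on_0[OF D] by simp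
next
  fix n x assume x: "x \<in> {0..b}"
  have d1: "((\<lambda>x. of_real x * D n x) has_vector_derivative (of_real x * D (Suc n) x + 1 * D n x))
      (at x within {0..b})"
    by (rule has_vector_derivative_mult[OF _ derivs_on_derivative[OF D x]])
       (auto intro!: derivative_eq_intros has_vector_derivative_of_real)
  show "((\<lambda>x. of_real x * D n x + of_nat n * D (n - 1) x) has_vector_derivative
      of_real x * D (Suc n) x + of_nat (Suc n) * D (Suc n - 1) x) (at x within {0..b})"
  proof (cases n)
    case 0
    then show ?thesis using d1 by (auto intro!: derivative_eq_intros)
  next
    case (Suc m)
    have "((\<lambda>x. of_nat n * D (n - 1) x) has_vector_derivative of_nat n * D n x) (at x within {0..b})"
      using derivs_on_derivative[OF D x, of m] Suc by (auto intro!: derivative_eq_intros)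
    from has_vector_derivative_add[OF d1 this] show ?thesis by (simp add: algebra_simps)
  qed
qed

lemma Cinf_on_interval_derivs_on:
  assumes "Cinf_on_interval 0 b f"
  obtains D where "derivs_on b (\<lambda>x. complex_of_real (f x)) D"
proof -
  obtain Df where Df: "\<forall>x\<in>{0..b}. Df 0 x = f x"
    "\<forall>n. \<forall>x\<in>{0..b}. (Df n has_vector_derivative Df (Suc n) x) (at x within {0..b})"
    using assms unfolding Cinf_on_interval_def by blast
  have "derivs_on b (\<lambda>x. complex_of_real (f x)) (\<lambda>n x. complex_of_real (Df n x))"
  proof (rule derivs_onI)
    fix n x assume x: "x \<in> {0..b}"
    have "(Df n has_real_derivative Df (Suc n) x) (at x within {0..b})"
      using Df(2) x by (simp add: has_real_derivative_iff_has_vector_derivative)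
    then show "((\<lambda>x. complex_of_real (Df n x)) has_vector_derivative complex_of_real (Df (Suc n) x))
        (at x within {0..b})"
      by (rule has_vector_derivative_of_real)
  qed (use Df in auto)
  then show ?thesis by (rule that)
qed

lemma mult_unit_mem_0b: "x \<in> {0..b} \<Longrightarrow> t \<in> {0..1} \<Longrightarrow> t * x \<in> {0..(b::real)}"
  by (auto simp: mult_le_cancel_right1 intro: order_trans[of _ x] mult_left_le_one_le)

lemma derivs_on_rescale_derivative:
  assumes D: "derivs_on b \<phi> D" and x: "x \<in> {0..b}" and t: "t \<in> {0..1}"
  shows "((\<lambda>x. D n (t * x)) has_vector_derivative t *\<^sub>R D (Suc n) (t * x)) (at x within {0..b})"
proof -
  have "(\<lambda>x. t * x) ` {0..b} \<subseteq> {0..b}" using mult_unit_mem_0b t by auto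
  from has_vector_derivative_within_subset[OF derivs_on_derivative[OF D mult_unit_mem_0b[OF x t]] this]
  have "(D n has_vector_derivative D (Suc n) (t * x)) (at (t * x) within (\<lambda>x. t * x) ` {0..b})" .
  moreover have "((\<lambda>x. t * x) has_vector_derivative t) (at x within {0..b})"
    by (auto intro!: derivative_eq_intros)
  ultimately show ?thesis using vector_diff_chain_within by (simp add: o_def)
qed

lemma derivs_on_rescale_derivative_param:
  assumes D: "derivs_on b \<phi> D" and x: "x \<in> {0..b}" and t: "t \<in> {0..1}"
  shows "((\<lambda>t. D n (t * x)) has_vector_derivative x *\<^sub>R D (Suc n) (t * x)) (at t within {0..1})"
proof -
  have "(\<lambda>t. t * x) ` {0..1} \<subseteq> {0..b}" using mult_unit_mem_0b x by auto
  from has_vector_derivative_within_subset[OF derivs_on_derivative[OF D mult_unit_mem_0b[OF x t]] this]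
  have "(D n has_vector_derivative D (Suc n) (t * x)) (at (t * x) within (\<lambda>t. t * x) ` {0..1})" .
  moreover have "((\<lambda>t. t * x) has_vector_derivative x) (at t within {0..1})"
    by (auto intro!: derivative_eq_intros)
  ultimately show ?thesis using vector_diff_chain_within by (simp add: o_def)
qed

lemma continuous_on_rescale:
  assumes D: "derivs_on b \<phi> D" and x: "x \<in> {0..b}"
  shows "continuous_on {0..1} (\<lambda>t. D n (t * x))"
proof (rule continuous_on_compose2[OF derivs_on_continuous[OF D, of n]])
  show "continuous_on {0..1} (\<lambda>t. t * x)" by (intro continuous_intros)
  show "(\<lambda>t. t * x) ` {0..1} \<subseteq> {0..b}" using mult_unit_mem_0b x by auto
qed

lemma has_integral_power_01: "((\<lambda>t::real. t ^ n) has_integral (1 / real (Suc n))) {0..1}"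
proof -
  have "((\<lambda>t. t ^ Suc n / real (Suc n)) has_real_derivative
      real (Suc n) * t ^ (Suc n - Suc 0) / real (Suc n)) (at t within {0..1})" for t :: real
    by (intro DERIV_cdivide DERIV_pow)
  then have "((\<lambda>t. t ^ Suc n / real (Suc n)) has_vector_derivative t ^ n) (at t within {0..1})" for t :: real
    by (simp add: has_real_derivative_iff_has_vector_derivative)
  from fundamental_theorem_of_calculus[OF _ this] show ?thesis by simp
qed

text \<open>Hadamard's lemma: \<open>F(x) = F(0) + x G(x)\<close> with \<open>G(x) = \<integral>\<^sub>0\<^sup>1 F'(t x) dt\<close>, and
  \<open>G\<^sup>(\<^sup>n\<^sup>)(x) = \<integral>\<^sub>0\<^sup>1 t\<^sup>n F\<^sup>(\<^sup>n\<^sup>+\<^sup>1\<^sup>)(t x) dt\<close> by differentiation under the integral sign.\<close>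
lemma hadamard_division:
  assumes b: "b > 0" and D: "derivs_on b F D"
  obtains G DG where "derivs_on b G DG" "\<And>x. x \<in> {0..b} \<Longrightarrow> F x = F 0 + of_real x * G x"
    "\<And>n. DG n 0 = D (Suc n) 0 / of_nat (Suc n)"
proof -
  define DG where "DG n x = integral {0..1} (\<lambda>t. (t ^ n) *\<^sub>R D (Suc n) (t * x))" for n x
  have integrable: "(\<lambda>t. (t ^ n) *\<^sub>R D m (t * x)) integrable_on {0..1}" if "x \<in> {0..b}" for n m x
    by (rule integrable_continuous_interval) (intro continuous_intros continuous_on_rescale[OF D that])
  have "(DG n has_vector_derivative DG (Suc n) x0) (at x0 within {0..b})" if x0: "x0 \<in> {0..b}" for n x0
  proof -
    have "((\<lambda>x. integral (cbox 0 1) (\<lambda>t. (t ^ n) *\<^sub>R D (Suc n) (t * x))) has_vector_derivative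
        integral (cbox 0 1) (\<lambda>t. (t ^ Suc n) *\<^sub>R D (Suc (Suc n)) (t * x0))) (at x0 within {0..b})"
    proof (rule leibniz_rule_vector_derivative)
      fix x t :: real assume x: "x \<in> {0..b}" and "t \<in> cbox 0 1"
      then have t: "t \<in> {0..1}" by simp
      from bounded_linear.has_vector_derivative[OF bounded_linear_scaleR_right
          derivs_on_rescale_derivative[OF D x t], of "t ^ n"]
      show "((\<lambda>x. (t ^ n) *\<^sub>R D (Suc n) (t * x)) has_vector_derivative
          (t ^ Suc n) *\<^sub>R D (Suc (Suc n)) (t * x)) (at x within {0..b})"
        by (simp add: mult.commute)
    next
      fix x :: real assume "x \<in> {0..b}"
      then show "(\<lambda>t. (t ^ n) *\<^sub>R D (Suc n) (t * x)) integrable_on cbox 0 1"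
        using integrable by simp
    next
      have "continuous_on ({0..b} \<times> {0..1}) (\<lambda>p. D (Suc (Suc n)) (snd p * fst p))"
      proof (rule continuous_on_compose2[OF derivs_on_continuous[OF D]])
        show "continuous_on ({0..b} \<times> {0..1}) (\<lambda>p. snd p * fst p)" by (intro continuous_intros)
        show "(\<lambda>p. snd p * fst p) ` ({0..b} \<times> {0..1}) \<subseteq> {0..b}" using mult_unit_mem_0b by auto
      qed
      then show "continuous_on ({0..b} \<times> cbox 0 1) (\<lambda>(x, t). (t ^ Suc n) *\<^sub>R D (Suc (Suc n)) (t * x))"
        by (auto simp: split_beta intro!: continuous_intros)
    qed (use x0 in auto)
    then show ?thesis unfolding DG_def[abs_def] by simp
  qed
  then have "derivs_on b (DG 0) DG" by (intro derivs_onI) auto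
  moreover have "F x = F 0 + of_real x * DG 0 x" if x: "x \<in> {0..b}" for x
  proof -
    have "((\<lambda>t. x *\<^sub>R D 1 (t * x)) has_integral (D 0 (1 * x) - D 0 (0 * x))) {0..1}"
      by (rule fundamental_theorem_of_calculus)
        (auto intro!: derivs_on_rescale_derivative_param[OF D x])
    moreover have "((\<lambda>t. x *\<^sub>R D 1 (t * x)) has_integral (x *\<^sub>R DG 0 x)) {0..1}"
      unfolding DG_def using integrable[OF x, of 0 1]
      by (intro has_integral_cmul) (simp add: integrable_integral)
    ultimately have "D 0 x - D 0 0 = x *\<^sub>R DG 0 x" by (simp add: has_integral_unique)
    moreover have "D 0 x = F x" "D 0 0 = F 0" using derivs_on_0[OF D] x b by auto
    ultimately show ?thesis by (simp add: scaleR_conv_of_real algebra_simps)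
  qed
  moreover have "DG n 0 = D (Suc n) 0 / of_nat (Suc n)" for n
  proof -
    have "((\<lambda>t. (t ^ n) *\<^sub>R D (Suc n) 0) has_integral (1 / real (Suc n)) *\<^sub>R D (Suc n) 0) {0..1}"
      by (rule has_integral_scaleR_left[OF has_integral_power_01])
    then have "DG n 0 = (1 / real (Suc n)) *\<^sub>R D (Suc n) 0" unfolding DG_def by (simp add: integral_unique)
    then show ?thesis by (simp add: scaleR_conv_of_real divide_inverse_commute)
  qed
  ultimately show ?thesis by (rule that)
qed

lemma taylor_remainder_factor:
  assumes b: "b > 0" and D: "derivs_on b s D"
  shows "\<exists>G DG. derivs_on b G DG \<and> (\<forall>x\<in>{0..b}.
           s x - (\<Sum>j\<le>r. D j 0 / fact j * complex_of_real (x ^ j)) = complex_of_real (x ^ (r+1)) * G x)"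
  using D
proof (induction r arbitrary: s D)
  case 0
  obtain G DG where G: "derivs_on b G DG" "\<And>x. x \<in> {0..b} \<Longrightarrow> s x = s 0 + of_real x * G x"
    using hadamard_division[OF b 0] by metis
  have "s 0 = D 0 0" using derivs_on_0[OF 0, of 0] b by simp
  then have "s x - (\<Sum>j\<le>0. D j 0 / fact j * complex_of_real (x ^ j)) = complex_of_real (x ^ (0 + 1)) * G x"
    if "x \<in> {0..b}" for x
    using G(2)[OF that] by simp
  with G(1) show ?case by blast
next
  case (Suc r)
  obtain G1 DG1 where G1: "derivs_on b G1 DG1" "\<And>x. x \<in> {0..b} \<Longrightarrow> s x = s 0 + of_real x * G1 x"
      "\<And>n. DG1 n 0 = D (Suc n) 0 / of_nat (Suc n)"
    using hadamard_division[OF b Suc.prems] by metis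
  obtain G DG where G: "derivs_on b G DG" "\<forall>x\<in>{0..b}.
      G1 x - (\<Sum>j\<le>r. DG1 j 0 / fact j * complex_of_real (x ^ j)) = complex_of_real (x ^ (r+1)) * G x"
    using Suc.IH[OF G1(1)] by blast
  have "s x - (\<Sum>j\<le>Suc r. D j 0 / fact j * complex_of_real (x ^ j)) = complex_of_real (x ^ (Suc r + 1)) * G x"
    if x: "x \<in> {0..b}" for x
  proof -
    have coeff: "D (Suc j) 0 / fact (Suc j) * complex_of_real (x ^ Suc j)
        = of_real x * (DG1 j 0 / fact j * complex_of_real (x ^ j))" for j
    proof -
      have "D (Suc j) 0 / fact (Suc j) = D (Suc j) 0 / of_nat (Suc j) / fact j"
        by (simp only: fact_Suc of_nat_mult divide_divide_eq_left)
      then show ?thesis unfolding G1(3)[symmetric] by simp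
    qed
    have "(\<Sum>j\<le>Suc r. D j 0 / fact j * complex_of_real (x ^ j))
        = D 0 0 + (\<Sum>j\<le>r. D (Suc j) 0 / fact (Suc j) * complex_of_real (x ^ Suc j))"
      by (subst sum.atMost_Suc_shift) simp
    also have "\<dots> = s 0 + of_real x * (\<Sum>j\<le>r. DG1 j 0 / fact j * complex_of_real (x ^ j))"
      unfolding coeff sum_distrib_left using derivs_on_0[OF Suc.prems, of 0] b by simp
    finally have "s x - (\<Sum>j\<le>Suc r. D j 0 / fact j * complex_of_real (x ^ j))
        = of_real x * (G1 x - (\<Sum>j\<le>r. DG1 j 0 / fact j * complex_of_real (x ^ j)))"
      using G1(2)[OF x] by (simp only: right_diff_distrib add_diff_cancel_left)
    also have "\<dots> = of_real x * (complex_of_real (x ^ (r+1)) * G x)" using bspec[OF G(2) x] by simp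
    finally show ?thesis by simp
  qed
  then show ?case using G(1) by blast
qed

section \<open>The operators \<open>\<sigma>\<^sub>k\<close>\<close>

text \<open>If \<open>\<sigma> - T\<^sub>r[\<sigma>] = x\<^sup>r\<^sup>+\<^sup>1 G\<close>, then \<open>g\<^sup>e (d/dx) [(\<sigma> - T\<^sub>r[\<sigma>]) / (g\<^sup>e g')] = g\<^sup>e (d/dx) [x G / ((r+1) g\<^sup>e)]\<close>
  equals \<open>(G + x G') / (r+1) - e G\<close>; this is the next \<open>\<sigma>\<close>, now manifestly smooth up to \<open>x = 0\<close>.\<close>
definition sigma_next :: "nat \<Rightarrow> complex \<Rightarrow> (real \<Rightarrow> complex) \<Rightarrow> (real \<Rightarrow> complex) \<Rightarrow> real \<Rightarrow> complex" where
  "sigma_next r e G G' x = 1 / of_nat (r + 1) * (G x + of_real x * G' x) - e * G x"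

lemma derivs_on_sigma_next:
  assumes "derivs_on b G DG"
  obtains D where "derivs_on b (sigma_next r e G (DG 1)) D"
  using derivs_on_diff[OF derivs_on_cmult[OF derivs_on_add[OF assms derivs_on_xmult[OF derivs_on_shift[OF assms]]]]
      derivs_on_cmult[OF assms]] that
  unfolding sigma_next_def[abs_def] by blast

lemma taylorT_eq_sum:
  assumes b: "b > 0" and D: "derivs_on b s D"
  shows "taylorT r b s x 0 = (\<Sum>j\<le>r. D j 0 / fact j * complex_of_real (x ^ j))"
  unfolding taylorT_def using iterated_dI_eq[OF b D, of 0] b by simp

lemma gpow_has_vector_derivative:
  assumes x: "x > 0"
  shows "((\<lambda>x. gpow r x a) has_vector_derivative
      (of_real (real (r + 1) * x ^ r) * (a * gpow r x (a - 1)))) (at x)"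
proof -
  have "((\<lambda>x. x ^ (r + 1)) has_real_derivative (real (r + 1) * x ^ (r + 1 - Suc 0))) (at x)"
    by (rule DERIV_pow)
  then have "((\<lambda>x. complex_of_real (x ^ (r + 1))) has_vector_derivative of_real (real (r + 1) * x ^ r)) (at x)"
    by (intro has_vector_derivative_of_real) simp
  moreover have "complex_of_real (x ^ (r + 1)) \<notin> \<real>\<^sub>\<le>\<^sub>0"
    using zero_less_power[OF x, of "r + 1"] by (simp add: complex_nonpos_Reals_iff del: zero_less_power)
  ultimately show ?thesis
    using field_vector_diff_chain_at[OF _ has_field_derivative_powr] by (simp add: gpow_def o_def)
qed

lemma weighted_derivative_eq_sigma_next:
  assumes b: "b > 0" and G: "derivs_on b G DG"
    and F: "\<And>y. y \<in> {0..b} \<Longrightarrow> F y = complex_of_real (y ^ (r + 1)) * G y"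
    and x: "x \<in> {0<..b}"
  shows "gpow r x e * dI b (\<lambda>y. F y / (gpow r y e * complex_of_real (real (r + 1) * y ^ r))) x
    = sigma_next r e G (DG 1) x"
proof -
  have x0: "x > 0" using x by auto
  define N where "N = (of_nat (r + 1) :: complex)"
  have N0: "N \<noteq> 0" unfolding N_def by (metis of_nat_eq_0_iff add_is_0 one_neq_zero)
  have N_pow: "complex_of_real (real (r + 1) * y ^ r) = N * of_real y ^ r" for y
    by (simp add: N_def)
  have gpow_neg: "gpow r y (- e) = inverse (gpow r y e)" for y
    by (simp add: gpow_def powr_minus)
  define h where "h y = of_real y * G y / N * gpow r y (- e)" for y
  have h_eq: "h y = F y / (gpow r y e * complex_of_real (real (r + 1) * y ^ r))"
    if y: "y \<in> {0..b}" "dist y x < x" for y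
  proof -
    have y0: "y > 0" using y x0 by (auto simp: dist_real_def)
    then have "gpow r y e \<noteq> 0" by (simp add: gpow_def)
    then show ?thesis
      unfolding h_def gpow_neg F[OF y(1)] N_pow using N0 y0 by (simp add: field_simps)
  qed
  have dh: "(h has_vector_derivative
      (G x + of_real x * DG 1 x) / N * gpow r x (- e)
       + of_real x * G x / N * (of_real (real (r + 1) * x ^ r) * (- e * gpow r x (- e - 1))))
      (at x within {0..b})"
  proof -
    have dG: "(G has_vector_derivative DG 1 x) (at x within {0..b})"
      using has_vector_derivative_transform_within[OF derivs_on_derivative[OF G, of x 0] zero_less_one]
        x derivs_on_0[OF G] by (auto simp: One_nat_def)
    have dgpow: "((\<lambda>y. gpow r y (- e)) has_vector_derivative
        (of_real (real (r + 1) * x ^ r) * (- e * gpow r x (- e - 1)))) (at x within {0..b})"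
      using gpow_has_vector_derivative[OF x0] has_vector_derivative_at_within by blast
    show ?thesis unfolding h_def[abs_def]
      by (rule derivative_eq_intros dG dgpow refl | simp)+
  qed
  have dF: "((\<lambda>y. F y / (gpow r y e * complex_of_real (real (r + 1) * y ^ r))) has_vector_derivative
      (G x + of_real x * DG 1 x) / N * gpow r x (- e)
       + of_real x * G x / N * (of_real (real (r + 1) * x ^ r) * (- e * gpow r x (- e - 1))))
      (at x within {0..b})"
    using x by (intro has_vector_derivative_transform_within[OF dh x0]) (auto simp: h_eq)
  have dI_eq: "dI b (\<lambda>y. F y / (gpow r y e * complex_of_real (real (r + 1) * y ^ r))) x
      = (G x + of_real x * DG 1 x) / N * gpow r x (- e)
        + of_real x * G x / N * (of_real (real (r + 1) * x ^ r) * (- e * gpow r x (- e - 1)))"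
    unfolding dI_def using vector_derivative_within_closed_interval[OF b _ dF] x by auto
  have "gpow r x e \<noteq> 0" using x0 by (simp add: gpow_def)
  moreover have gpow_pred: "gpow r x (- e - 1) = inverse (gpow r x e) / (of_real x * of_real x ^ r)"
    unfolding gpow_def using powr_diff[of _ "- e" 1] by (simp add: powr_minus)
  ultimately show ?thesis
    unfolding sigma_next_def dI_eq unfolding gpow_pred gpow_neg N_pow N_def[symmetric] using x0 N0
    by (simp add: field_simps)
qed

lemma taylorT_remainder_factor:
  assumes b: "b > 0" and D: "derivs_on b s D"
  obtains G DG where "derivs_on b G DG"
    "\<And>x. x \<in> {0..b} \<Longrightarrow> s x - taylorT r b s x 0 = complex_of_real (x ^ (r + 1)) * G x"
  using taylor_remainder_factor[OF b D, of r] taylorT_eq_sum[OF b D] by auto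

lemma Lim_at_right_0_eq:
  fixes P u :: "real \<Rightarrow> complex"
  assumes b: "b > 0" and P: "continuous_on {0..b} P" and u: "\<And>x. x \<in> {0<..b} \<Longrightarrow> u x = P x"
  shows "Lim (at_right 0) u = P 0"
proof -
  have "(P \<longlongrightarrow> P 0) (at 0 within {0..b})"
    using P b unfolding continuous_on_def by simp
  moreover have "eventually (\<lambda>x. x \<in> {0..b} \<longleftrightarrow> x \<in> {0<..}) (at (0::real))"
    unfolding eventually_at using b by (intro exI[of _ b]) (auto simp: dist_real_def)
  ultimately have "(P \<longlongrightarrow> P 0) (at_right 0)"
    by (rule Lim_transform_within_set)
  moreover have "eventually (\<lambda>x. u x = P x) (at_right (0::real))"
    using eventually_at_right_real[OF b] by eventually_elim (auto intro: u)
  ultimately have "(u \<longlongrightarrow> P 0) (at_right 0)"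
    using tendsto_cong by blast
  then show ?thesis by (rule tendsto_Lim[rotated]) simp
qed

lemma sigma_hat_Suc_eq_sigma_next:
  assumes b: "b > 0" and G: "derivs_on b G DG"
    and factor: "\<And>x. x \<in> {0..b} \<Longrightarrow>
      sigma_hat r \<nu> b \<phi> k x - taylorT r b (sigma_hat r \<nu> b \<phi> k) x 0 = complex_of_real (x ^ (r + 1)) * G x"
    and x: "x \<in> {0..b}"
  shows "sigma_hat r \<nu> b \<phi> (Suc k) x = sigma_next r (\<nu> + of_nat (Suc k)) G (DG 1) x"
proof -
  define s where "s = sigma_hat r \<nu> b \<phi> k"
  define e where "e = \<nu> + of_nat (Suc k)"
  define u where "u x = gpow r x e * dI b (\<lambda>x. (s x - taylorT r b s x 0)
      / (gpow r x e * complex_of_real (real (r + 1) * x ^ r))) x" for x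
  have sigma_Suc: "sigma_hat r \<nu> b \<phi> (Suc k) = (\<lambda>x. if x = 0 then Lim (at_right 0) u else u x)"
    unfolding sigma_hat.simps Let_def u_def s_def e_def ..
  have u: "u x = sigma_next r e G (DG 1) x" if "x \<in> {0<..b}" for x
    unfolding u_def s_def by (rule weighted_derivative_eq_sigma_next[OF b G factor that])
  obtain D where "derivs_on b (sigma_next r e G (DG 1)) D"
    using derivs_on_sigma_next[OF G] .
  then have "Lim (at_right 0) u = sigma_next r e G (DG 1) 0"
    by (intro Lim_at_right_0_eq[OF b derivs_on_continuous_fun] u)
  then show ?thesis using x u unfolding sigma_Suc e_def by auto
qed

lemma sigma_hat_derivs_on:
  assumes b: "b > 0" and \<phi>: "derivs_on b \<phi> D\<^sub>\<phi>"
  shows "\<exists>D. derivs_on b (sigma_hat r \<nu> b \<phi> k) D"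
proof (induction k)
  case 0
  then show ?case using \<phi> by auto
next
  case (Suc k)
  then obtain D where "derivs_on b (sigma_hat r \<nu> b \<phi> k) D" by blast
  then obtain G DG where G: "derivs_on b G DG" and factor: "\<And>x. x \<in> {0..b} \<Longrightarrow>
      sigma_hat r \<nu> b \<phi> k x - taylorT r b (sigma_hat r \<nu> b \<phi> k) x 0 = complex_of_real (x ^ (r + 1)) * G x"
    using taylorT_remainder_factor[OF b] by metis
  obtain D' where "derivs_on b (sigma_next r (\<nu> + of_nat (Suc k)) G (DG 1)) D'"
    using derivs_on_sigma_next[OF G] .
  then have "derivs_on b (sigma_hat r \<nu> b \<phi> (Suc k)) D'"
    by (rule derivs_on_cong) (use sigma_hat_Suc_eq_sigma_next[OF b G factor] in auto)
  then show ?case by blast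
qed

section \<open>Integration by parts against Bessel functions\<close>

lemma continuous_on_bessel_J: "continuous_on {0<..} (bessel_J \<mu>)"
  by (rule continuous_at_imp_continuous_on)
     (auto intro: has_vector_derivative_continuous bessel_J_has_vector_derivative)

lemma continuous_on_bessel_J_at_0:
  assumes \<mu>: "Re \<mu> > 0"
  shows "continuous_on {0..} (bessel_J \<mu>)"
  unfolding continuous_on_eq_continuous_within
proof
  fix t :: real assume t: "t \<in> {0..}"
  show "continuous (at t within {0..}) (bessel_J \<mu>)"
  proof (cases "t = 0")
    case False
    then have "t > 0" using t by auto
    then show ?thesis
      using has_vector_derivative_continuous[OF bessel_J_has_vector_derivative]
        continuous_at_imp_continuous_at_within by blast
  next
    case True
    obtain K where K: "K \<ge> 0" "\<And>s. 0 < s \<Longrightarrow> s \<le> 1 \<Longrightarrow> cmod (bessel_J \<mu> s) \<le> K * (s/2) powr Re \<mu>"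
      using bessel_J_bound_near_0[of 1] by auto
    have "((\<lambda>s. (s/2) powr Re \<mu>) \<longlongrightarrow> 0) (at 0 within {0..})"
    proof (rule tendsto_zero_powrI)
      show "((\<lambda>s::real. s/2) \<longlongrightarrow> 0) (at 0 within {0..})" by (auto intro!: tendsto_eq_intros)
      show "eventually (\<lambda>s::real. 0 \<le> s/2) (at 0 within {0..})"
        unfolding eventually_at by (intro exI[of _ 1]) auto
    qed (use \<mu> in auto)
    moreover have "eventually (\<lambda>s. norm (bessel_J \<mu> s) \<le> norm ((s/2) powr Re \<mu>) * K) (at 0 within {0..})"
    proof -
      have "eventually (\<lambda>s. s \<in> {0..} \<and> s \<noteq> 0 \<and> dist s 0 < 1) (at (0::real) within {0..})"
        unfolding eventually_at by (intro exI[of _ 1]) auto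
      then show ?thesis
        by eventually_elim (use K(2) in \<open>auto simp: dist_real_def mult.commute\<close>)
    qed
    ultimately have "(bessel_J \<mu> \<longlongrightarrow> 0) (at 0 within {0..})"
      by (rule tendsto_0_le)
    then show ?thesis using True by (simp add: continuous_within)
  qed
qed

lemma continuous_on_bessel_J_power_pos:
  assumes "\<omega> > 0"
  shows "continuous_on {0<..b} (\<lambda>x. bessel_J \<mu> (\<omega> * x ^ (r + 1)))"
  by (rule continuous_on_compose2[OF continuous_on_bessel_J]) (use assms in \<open>auto intro!: continuous_intros\<close>)

lemma continuous_on_bessel_J_power:
  assumes "Re \<mu> > 0" and "\<omega> > 0"
  shows "continuous_on {0..b} (\<lambda>x. bessel_J \<mu> (\<omega> * x ^ (r + 1)))"
  by (rule continuous_on_compose2[OF continuous_on_bessel_J_at_0[OF assms(1)]])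
    (use assms(2) in \<open>auto intro!: continuous_intros\<close>)

text \<open>The integrand is measurable and dominated by a multiple of \<open>x\<^sup>(\<^sup>r\<^sup>+\<^sup>1\<^sup>) \<^sup>R\<^sup>e \<^sup>\<mu>\<close>.\<close>
lemma integrable_bessel_product:
  assumes b: "b > 0" and \<omega>: "\<omega> > 0" and \<mu>: "real (r + 1) * Re \<mu> > -1"
    and \<phi>: "continuous_on {0..b} \<phi>"
  shows "(\<lambda>x. \<phi> x * bessel_J \<mu> (\<omega> * x ^ (r + 1))) integrable_on {0..b}"
proof -
  define a where "a = real (r + 1) * Re \<mu>"
  obtain K where K: "K \<ge> 0"
    "\<And>t. 0 < t \<Longrightarrow> t \<le> \<omega> * b ^ (r + 1) \<Longrightarrow> cmod (bessel_J \<mu> t) \<le> K * (t/2) powr Re \<mu>"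
    using bessel_J_bound_near_0[of "\<omega> * b ^ (r + 1)"] b \<omega> by auto
  obtain M where M: "M \<ge> 0" "\<And>x. x \<in> {0..b} \<Longrightarrow> cmod (\<phi> x) \<le> M"
    using continuous_on_compact_bound[OF compact_Icc \<phi>] by blast
  define g where "g x = M * K * (\<omega>/2) powr Re \<mu> * x powr a" for x
  have "g integrable_on {0..b}"
    using has_integral_mult_right[OF has_integral_powr_from_0[of a b], of "M * K * (\<omega>/2) powr Re \<mu>"]
      \<mu> b unfolding g_def a_def integrable_on_def by auto
  then have g: "g integrable_on {0<..b}"
    by (rule integrable_spike_set) (auto intro: negligible_subset[of "{0}"])
  have bound: "norm (\<phi> x * bessel_J \<mu> (\<omega> * x ^ (r + 1))) \<le> g x" if x: "x \<in> {0<..b}" for x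
  proof -
    have x0: "x > 0" and xb: "x \<le> b" using x by auto
    have "x ^ (r + 1) \<le> b ^ (r + 1)" using x0 xb by (intro power_mono) auto
    then have "\<omega> * x ^ (r + 1) \<le> \<omega> * b ^ (r + 1)"
      using \<omega> by (intro mult_left_mono) auto
    moreover have "(\<omega> * x ^ (r + 1) / 2) powr Re \<mu> = (\<omega>/2) powr Re \<mu> * (x ^ (r + 1)) powr Re \<mu>"
      using x0 \<omega> by (simp add: powr_mult[symmetric] mult_ac)
    moreover have "(x ^ (r + 1)) powr Re \<mu> = x powr a"
      unfolding a_def powr_realpow[OF x0, symmetric] powr_powr ..
    ultimately have "cmod (bessel_J \<mu> (\<omega> * x ^ (r + 1))) \<le> K * ((\<omega>/2) powr Re \<mu> * x powr a)"
      using K(2)[of "\<omega> * x ^ (r + 1)"] x0 \<omega> by simp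
    then have "cmod (\<phi> x) * cmod (bessel_J \<mu> (\<omega> * x ^ (r + 1)))
        \<le> M * (K * ((\<omega>/2) powr Re \<mu> * x powr a))"
      using M x by (intro mult_mono) auto
    then show ?thesis unfolding norm_mult g_def by (simp add: mult_ac)
  qed
  have "(\<lambda>x. \<phi> x * bessel_J \<mu> (\<omega> * x ^ (r + 1))) \<in> borel_measurable (lebesgue_on {0<..b})"
    using continuous_on_subset[OF \<phi> greaterThanAtMost_subseteq_atLeastAtMost_iff[THEN iffD2]]
      continuous_on_bessel_J_power_pos[OF \<omega>, of b \<mu> r]
    by (intro continuous_imp_measurable_on_sets_lebesgue continuous_intros) auto
  from measurable_bounded_by_integrable_imp_integrable[OF this g bound]
  show ?thesis
    by (rule integrable_spike_set) (auto intro: negligible_subset[of "{0}"])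
qed

text \<open>With \<open>t = \<omega> x\<^sup>r\<^sup>+\<^sup>1\<close>, the recurrence \<open>J\<^sub>\<mu>\<^sub>+\<^sub>1' = J\<^sub>\<mu> - (\<mu> + 1) J\<^sub>\<mu>\<^sub>+\<^sub>1 / t\<close> turns
  \<open>(x G J\<^sub>\<mu>\<^sub>+\<^sub>1(t) / (r+1))'\<close> into \<open>\<omega> x\<^sup>r\<^sup>+\<^sup>1 G J\<^sub>\<mu>(t)\<close> plus a multiple of \<open>J\<^sub>\<mu>\<^sub>+\<^sub>1(t)\<close>.\<close>
lemma has_vector_derivative_bessel_primitive:
  assumes \<omega>: "\<omega> > 0" and G: "derivs_on b G DG" and x: "x \<in> {0<..<b}"
  shows "((\<lambda>x. of_real x * G x / of_nat (r + 1) * bessel_J (\<mu> + 1) (\<omega> * x ^ (r + 1))) has_vector_derivative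
      of_real \<omega> * (complex_of_real (x ^ (r + 1)) * G x * bessel_J \<mu> (\<omega> * x ^ (r + 1)))
      + sigma_next r (\<mu> + 1) G (DG 1) x * bessel_J (\<mu> + 1) (\<omega> * x ^ (r + 1))) (at x)"
proof -
  have x0: "x > 0" using x by auto
  define N where "N = (of_nat (r + 1) :: complex)"
  have N0: "N \<noteq> 0" unfolding N_def by (metis of_nat_eq_0_iff add_is_0 one_neq_zero)
  define t where "t = \<omega> * x ^ (r + 1)"
  have t0: "t > 0" using x0 \<omega> by (simp add: t_def)
  have "((\<lambda>x. \<omega> * x ^ (r + 1)) has_real_derivative (\<omega> * (real (r + 1) * x ^ (r + 1 - Suc 0)))) (at x)"
    by (intro DERIV_cmult DERIV_pow)
  then have "((\<lambda>x. \<omega> * x ^ (r + 1)) has_vector_derivative (\<omega> * (real (r + 1) * x ^ r))) (at x)"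
    by (simp add: has_real_derivative_iff_has_vector_derivative)
  from vector_diff_chain_at[OF this bessel_J_Suc_has_vector_derivative[OF t0[unfolded t_def]]]
  have dJ: "((\<lambda>x. bessel_J (\<mu> + 1) (\<omega> * x ^ (r + 1))) has_vector_derivative
      (\<omega> * (real (r + 1) * x ^ r)) *\<^sub>R (bessel_J \<mu> t - (\<mu> + 1) / of_real t * bessel_J (\<mu> + 1) t)) (at x)"
    by (simp add: o_def t_def)
  have dG: "(G has_vector_derivative DG 1 x) (at x)"
    by (rule derivs_on_has_vector_derivative_at[OF G x])
  have "((\<lambda>x. of_real x * G x / N * bessel_J (\<mu> + 1) (\<omega> * x ^ (r + 1))) has_vector_derivative
      (of_real x * DG 1 x + 1 * G x) / N * bessel_J (\<mu> + 1) t
       + of_real x * G x / N * ((\<omega> * (real (r + 1) * x ^ r)) *\<^sub>R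
           (bessel_J \<mu> t - (\<mu> + 1) / of_real t * bessel_J (\<mu> + 1) t))) (at x)"
    by (rule derivative_eq_intros dG dJ refl | simp add: t_def)+
  moreover have "(of_real x * DG 1 x + 1 * G x) / N * bessel_J (\<mu> + 1) t
       + of_real x * G x / N * ((\<omega> * (real (r + 1) * x ^ r)) *\<^sub>R
           (bessel_J \<mu> t - (\<mu> + 1) / of_real t * bessel_J (\<mu> + 1) t))
      = of_real \<omega> * (complex_of_real (x ^ (r + 1)) * G x * bessel_J \<mu> t)
        + sigma_next r (\<mu> + 1) G (DG 1) x * bessel_J (\<mu> + 1) t"
  proof -
    have "(\<omega> * (real (r + 1) * x ^ r)) *\<^sub>R z = of_real \<omega> * N * of_real x ^ r * z" for z :: complex
      by (simp add: scaleR_conv_of_real N_def)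
    moreover have "complex_of_real t = of_real \<omega> * of_real x * of_real x ^ r" by (simp add: t_def)
    ultimately show ?thesis
      unfolding sigma_next_def N_def[symmetric] using N0 \<omega> x0 by (simp add: field_simps)
  qed
  ultimately show ?thesis unfolding N_def t_def by simp
qed

lemma bessel_integration_by_parts:
  assumes b: "b > 0" and \<omega>: "\<omega> > 0" and \<mu>: "real (r + 1) * Re \<mu> > -1" and G: "derivs_on b G DG"
  shows "((\<lambda>x. complex_of_real (x ^ (r + 1)) * G x * bessel_J \<mu> (\<omega> * x ^ (r + 1))) has_integral
     (of_real b * G b / of_nat (r + 1) * bessel_J (\<mu> + 1) (\<omega> * b ^ (r + 1))
       - integral {0..b} (\<lambda>x. sigma_next r (\<mu> + 1) G (DG 1) x * bessel_J (\<mu> + 1) (\<omega> * x ^ (r + 1))))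
     / of_real \<omega>) {0..b}"
proof -
  define P where "P x = of_real x * G x / of_nat (r + 1) * bessel_J (\<mu> + 1) (\<omega> * x ^ (r + 1))" for x
  define S where "S x = sigma_next r (\<mu> + 1) G (DG 1) x * bessel_J (\<mu> + 1) (\<omega> * x ^ (r + 1))" for x
  have "Re \<mu> > -1"
  proof (cases "Re \<mu> < 0")
    case True
    then have "real (r + 1) * Re \<mu> \<le> Re \<mu>"
      using mult_right_mono_neg[of 1 "real (r + 1)" "Re \<mu>"] by simp
    with \<mu> show ?thesis by linarith
  qed simp
  then have \<mu>1: "Re (\<mu> + 1) > 0" by simp
  then have "0 < real (r + 1) * Re (\<mu> + 1)" by simp
  then have \<mu>1': "real (r + 1) * Re (\<mu> + 1) > -1" by linarith
  have "continuous_on {0..b} P"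
    unfolding P_def using derivs_on_continuous_fun[OF G] continuous_on_bessel_J_power[OF \<mu>1 \<omega>]
    by (intro continuous_intros) (auto simp: one_plus_of_nat_neq_0)
  moreover have "(P has_vector_derivative
      of_real \<omega> * (complex_of_real (x ^ (r + 1)) * G x * bessel_J \<mu> (\<omega> * x ^ (r + 1))) + S x) (at x)"
    if "x \<in> {0<..<b}" for x
    unfolding P_def[abs_def] S_def by (rule has_vector_derivative_bessel_primitive[OF \<omega> G that])
  ultimately have "((\<lambda>x. of_real \<omega> * (complex_of_real (x ^ (r + 1)) * G x * bessel_J \<mu> (\<omega> * x ^ (r + 1))) + S x)
      has_integral (P b - P 0)) {0..b}"
    using b by (intro fundamental_theorem_of_calculus_interior) auto
  note ftc = this
  obtain DS where "derivs_on b (sigma_next r (\<mu> + 1) G (DG 1)) DS"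
    using derivs_on_sigma_next[OF G] .
  then have intS: "(S has_integral integral {0..b} S) {0..b}"
    unfolding S_def
    by (intro integrable_integral integrable_bessel_product[OF b \<omega> \<mu>1'] derivs_on_continuous_fun)
  from has_integral_diff[OF ftc intS]
  have "((\<lambda>x. of_real \<omega> * (complex_of_real (x ^ (r + 1)) * G x * bessel_J \<mu> (\<omega> * x ^ (r + 1))))
      has_integral (P b - integral {0..b} S)) {0..b}"
    by (simp add: P_def)
  from has_integral_mult_right[OF this, of "inverse (of_real \<omega>)"]
  have "((\<lambda>x. complex_of_real (x ^ (r + 1)) * G x * bessel_J \<mu> (\<omega> * x ^ (r + 1)))
      has_integral inverse (of_real \<omega>) * (P b - integral {0..b} S)) {0..b}"
    using \<omega> by (simp add: mult.assoc[symmetric])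
  then show ?thesis unfolding P_def S_def by (simp add: divide_inverse_commute)
qed

section \<open>The asymptotic expansion\<close>

lemma integrability_exponent_shift:
  assumes "Re \<nu> > - 1 / real (r + 1)"
  shows "real (r + 1) * Re (\<nu> + of_nat k) > -1"
proof -
  have "real (r + 1) * Re \<nu> > real (r + 1) * (- 1 / real (r + 1))"
    using assms by (intro mult_strict_left_mono) auto
  then have "real (r + 1) * Re \<nu> > -1" by simp
  moreover have "real (r + 1) * Re (\<nu> + of_nat k) \<ge> real (r + 1) * Re \<nu>"
    by (intro mult_left_mono) auto
  ultimately show ?thesis by linarith
qed

lemma integral_taylor_split:
  assumes b: "b > 0" and \<omega>: "\<omega> > 0" and \<mu>: "real (r + 1) * Re \<mu> > -1" and D: "derivs_on b s D"
  shows "integral {0..b} (\<lambda>x. s x * bessel_J \<mu> (\<omega> * x ^ (r + 1)))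
       = (\<Sum>j\<le>r. (dI b ^^ j) s 0 / fact j * momentM r b j \<mu> \<omega>)
         + integral {0..b} (\<lambda>x. (s x - taylorT r b s x 0) * bessel_J \<mu> (\<omega> * x ^ (r + 1)))"
proof -
  define J where "J x = bessel_J \<mu> (\<omega> * x ^ (r + 1))" for x
  have taylor: "taylorT r b s x 0 * J x = (\<Sum>j\<le>r. (dI b ^^ j) s 0 / fact j * (complex_of_real (x ^ j) * J x))"
    for x
    unfolding taylorT_def sum_distrib_right by (simp add: mult.assoc)
  have sum: "((\<lambda>x. \<Sum>j\<le>r. (dI b ^^ j) s 0 / fact j * (complex_of_real (x ^ j) * J x)) has_integral
      (\<Sum>j\<le>r. (dI b ^^ j) s 0 / fact j * momentM r b j \<mu> \<omega>)) {0..b}"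
    unfolding momentM_def J_def
    by (intro has_integral_sum finite_atMost has_integral_mult_right integrable_integral
        integrable_bessel_product[OF b \<omega> \<mu>] continuous_intros)
  have remainder: "((\<lambda>x. (s x - taylorT r b s x 0) * J x) has_integral
      integral {0..b} (\<lambda>x. (s x - taylorT r b s x 0) * J x)) {0..b}"
    unfolding J_def taylorT_eq_sum[OF b D]
    by (intro integrable_integral integrable_bessel_product[OF b \<omega> \<mu>] continuous_intros
        derivs_on_continuous_fun[OF D])
  have "(\<lambda>x. (\<Sum>j\<le>r. (dI b ^^ j) s 0 / fact j * (complex_of_real (x ^ j) * J x))
      + (s x - taylorT r b s x 0) * J x) = (\<lambda>x. s x * J x)"
    unfolding taylor[symmetric] by (simp add: algebra_simps)
  with has_integral_add[OF sum remainder] show ?thesis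
    unfolding J_def by (simp add: integral_unique)
qed

definition hankel_remainder :: "nat \<Rightarrow> real \<Rightarrow> complex \<Rightarrow> (real \<Rightarrow> complex) \<Rightarrow> nat \<Rightarrow> real \<Rightarrow> complex" where
  "hankel_remainder r b \<nu> \<phi> k \<omega> = integral {0..b} (\<lambda>x.
     (sigma_hat r \<nu> b \<phi> k x - taylorT r b (sigma_hat r \<nu> b \<phi> k) x 0) * bessel_J (\<nu> + of_nat k) (\<omega> * x ^ (r + 1)))"

lemma hankel_remainder_recursion:
  assumes b: "b > 0" and \<omega>: "\<omega> > 0" and \<mu>: "real (r + 1) * Re (\<nu> + of_nat k) > -1"
    and \<phi>: "derivs_on b \<phi> D\<^sub>\<phi>"
  shows "of_real \<omega> * hankel_remainder r b \<nu> \<phi> k \<omega>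
    = (sigma_hat r \<nu> b \<phi> k b - taylorT r b (sigma_hat r \<nu> b \<phi> k) b 0)
        * bessel_J (\<nu> + of_nat (Suc k)) (\<omega> * b ^ (r + 1)) / complex_of_real (real (r + 1) * b ^ r)
      - integral {0..b} (\<lambda>x. sigma_hat r \<nu> b \<phi> (Suc k) x * bessel_J (\<nu> + of_nat (Suc k)) (\<omega> * x ^ (r + 1)))"
proof -
  define \<sigma> where "\<sigma> = sigma_hat r \<nu> b \<phi>"
  obtain D where "derivs_on b (\<sigma> k) D" using sigma_hat_derivs_on[OF b \<phi>] unfolding \<sigma>_def by blast
  then obtain G DG where G: "derivs_on b G DG" and factor: "\<And>x. x \<in> {0..b} \<Longrightarrow>
      \<sigma> k x - taylorT r b (\<sigma> k) x 0 = complex_of_real (x ^ (r + 1)) * G x"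
    using taylorT_remainder_factor[OF b] by metis
  have \<nu>_Suc: "\<nu> + of_nat (Suc k) = \<nu> + of_nat k + 1" by simp
  have remainder: "hankel_remainder r b \<nu> \<phi> k \<omega>
      = (of_real b * G b / of_nat (r + 1) * bessel_J (\<nu> + of_nat (Suc k)) (\<omega> * b ^ (r + 1))
         - integral {0..b} (\<lambda>x. \<sigma> (Suc k) x * bessel_J (\<nu> + of_nat (Suc k)) (\<omega> * x ^ (r + 1))))
        / of_real \<omega>"
  proof -
    have next_eq: "integral {0..b} (\<lambda>x. sigma_next r (\<nu> + of_nat (Suc k)) G (DG 1) x
          * bessel_J (\<nu> + of_nat (Suc k)) (\<omega> * x ^ (r + 1)))
        = integral {0..b} (\<lambda>x. \<sigma> (Suc k) x * bessel_J (\<nu> + of_nat (Suc k)) (\<omega> * x ^ (r + 1)))"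
      unfolding \<sigma>_def using sigma_hat_Suc_eq_sigma_next[OF b G factor[unfolded \<sigma>_def]]
      by (intro integral_cong) simp
    have "hankel_remainder r b \<nu> \<phi> k \<omega> = integral {0..b} (\<lambda>x.
        complex_of_real (x ^ (r + 1)) * G x * bessel_J (\<nu> + of_nat k) (\<omega> * x ^ (r + 1)))"
      unfolding hankel_remainder_def \<sigma>_def[symmetric] by (rule integral_cong) (simp add: factor)
    with integral_unique[OF bessel_integration_by_parts[OF b \<omega> \<mu> G]] next_eq show ?thesis
      unfolding \<nu>_Suc[symmetric] by simp
  qed
  have boundary: "of_real b * G b / of_nat (r + 1)
      = (\<sigma> k b - taylorT r b (\<sigma> k) b 0) / complex_of_real (real (r + 1) * b ^ r)"
  proof -
    define N where "N = (of_nat (r + 1) :: complex)"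
    have "N \<noteq> 0" unfolding N_def by (metis of_nat_eq_0_iff add_is_0 one_neq_zero)
    moreover have "(of_real b :: complex) ^ r \<noteq> 0" using b by simp
    moreover have factor_b: "\<sigma> k b - taylorT r b (\<sigma> k) b 0 = of_real b * of_real b ^ r * G b"
      using factor[of b] b by simp
    moreover have "complex_of_real (real (r + 1) * b ^ r) = N * of_real b ^ r" by (simp add: N_def)
    ultimately show ?thesis unfolding factor_b N_def[symmetric] using b by auto
  qed
  have "of_real \<omega> * hankel_remainder r b \<nu> \<phi> k \<omega>
      = of_real b * G b / of_nat (r + 1) * bessel_J (\<nu> + of_nat (Suc k)) (\<omega> * b ^ (r + 1))
         - integral {0..b} (\<lambda>x. \<sigma> (Suc k) x * bessel_J (\<nu> + of_nat (Suc k)) (\<omega> * x ^ (r + 1)))"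
    unfolding remainder using \<omega> by simp
  then show ?thesis unfolding boundary \<sigma>_def by simp
qed

lemma telescoping_expansion:
  fixes I A R B :: "nat \<Rightarrow> complex" and \<omega> :: real
  assumes split: "\<And>k. I k = A k + R k"
    and recursion: "\<And>k. of_real \<omega> * R k = B (Suc k) - I (Suc k)"
    and \<omega>: "\<omega> \<noteq> 0"
  shows "I 0 - (\<Sum>k\<le>n. 1 / (- complex_of_real \<omega>) ^ k * (A k - (if k = 0 then 0 else B k)))
         = R n / (- complex_of_real \<omega>) ^ n"
proof (induction n)
  case 0
  then show ?case using split[of 0] by simp
next
  case (Suc n)
  have \<omega>': "complex_of_real \<omega> \<noteq> 0" using \<omega> by simp
  have R: "R n = (B (Suc n) - A (Suc n) - R (Suc n)) / of_real \<omega>"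
    using recursion[of n] split[of "Suc n"] \<omega>' by (simp add: field_simps)
  have "I 0 - (\<Sum>k\<le>Suc n. 1 / (- complex_of_real \<omega>) ^ k * (A k - (if k = 0 then 0 else B k)))
      = R n / (- complex_of_real \<omega>) ^ n - 1 / (- complex_of_real \<omega>) ^ Suc n * (A (Suc n) - B (Suc n))"
    using Suc.IH by simp
  also have "\<dots> = R (Suc n) / (- complex_of_real \<omega>) ^ Suc n"
    unfolding R using \<omega>' by (simp add: field_simps)
  finally show ?case .
qed

lemma hankel_expansion_eq_remainder:
  assumes b: "b > 0" and \<nu>: "Re \<nu> > - 1 / real (r + 1)" and \<phi>: "derivs_on b \<phi> D\<^sub>\<phi>" and \<omega>: "\<omega> > 0"
  shows "hankelH r b \<nu> \<phi> \<omega>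
       - (\<Sum>k\<le>N. (1 / (- complex_of_real \<omega>) ^ k) *
            ((\<Sum>j\<le>r. (dI b ^^ j) (sigma_hat r \<nu> b \<phi> k) 0 / fact j * momentM r b j (\<nu> + of_nat k) \<omega>)
             - (if k = 0 then 0 else
                  (sigma_hat r \<nu> b \<phi> (k - 1) b - taylorT r b (sigma_hat r \<nu> b \<phi> (k - 1)) b 0)
                  * bessel_J (\<nu> + of_nat k) (\<omega> * b ^ (r + 1))
                  / complex_of_real (real (r + 1) * b ^ r))))
     = hankel_remainder r b \<nu> \<phi> N \<omega> / (- complex_of_real \<omega>) ^ N"
proof -
  define \<sigma> where "\<sigma> = sigma_hat r \<nu> b \<phi>"
  define I where "I k = integral {0..b} (\<lambda>x. \<sigma> k x * bessel_J (\<nu> + of_nat k) (\<omega> * x ^ (r + 1)))" for k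
  define A where "A k = (\<Sum>j\<le>r. (dI b ^^ j) (\<sigma> k) 0 / fact j * momentM r b j (\<nu> + of_nat k) \<omega>)" for k
  define B where "B k = (\<sigma> (k - 1) b - taylorT r b (\<sigma> (k - 1)) b 0) * bessel_J (\<nu> + of_nat k) (\<omega> * b ^ (r + 1))
    / complex_of_real (real (r + 1) * b ^ r)" for k
  have "I k = A k + hankel_remainder r b \<nu> \<phi> k \<omega>" for k
  proof -
    obtain D where "derivs_on b (\<sigma> k) D" using sigma_hat_derivs_on[OF b \<phi>] unfolding \<sigma>_def by blast
    from integral_taylor_split[OF b \<omega> integrability_exponent_shift[OF \<nu>] this]
    show ?thesis unfolding hankel_remainder_def I_def A_def \<sigma>_def .
  qed
  moreover have "of_real \<omega> * hankel_remainder r b \<nu> \<phi> k \<omega> = B (Suc k) - I (Suc k)" for k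
    unfolding B_def I_def \<sigma>_def
    using hankel_remainder_recursion[OF b \<omega> integrability_exponent_shift[OF \<nu>] \<phi>] by simp
  ultimately have "I 0 - (\<Sum>k\<le>N. 1 / (- complex_of_real \<omega>) ^ k * (A k - (if k = 0 then 0 else B k)))
      = hankel_remainder r b \<nu> \<phi> N \<omega> / (- complex_of_real \<omega>) ^ N"
    using \<omega> by (intro telescoping_expansion) auto
  moreover have "hankelH r b \<nu> \<phi> \<omega> = I 0" by (simp add: hankelH_def I_def \<sigma>_def)
  ultimately show ?thesis unfolding A_def B_def \<sigma>_def by simp
qed

lemma norm_integral_bessel_le:
  assumes b: "b > 0" and \<omega>: "\<omega> > 0" and \<mu>: "Re \<mu> > 0" and \<phi>: "continuous_on {0..b} \<phi>"
    and M: "\<And>x. x \<in> {0..b} \<Longrightarrow> cmod (\<phi> x) \<le> M"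
    and C: "\<And>t. t \<ge> 0 \<Longrightarrow> cmod (bessel_J \<mu> t) \<le> C"
  shows "cmod (integral {0..b} (\<lambda>x. \<phi> x * bessel_J \<mu> (\<omega> * x ^ (r + 1)))) \<le> M * C * b"
proof -
  have "0 < real (r + 1) * Re \<mu>" using \<mu> by simp
  then have "(\<lambda>x. \<phi> x * bessel_J \<mu> (\<omega> * x ^ (r + 1))) integrable_on {0..b}"
    by (intro integrable_bessel_product[OF b \<omega> _ \<phi>]) linarith
  then have integral: "((\<lambda>x. \<phi> x * bessel_J \<mu> (\<omega> * x ^ (r + 1))) has_integral
      integral {0..b} (\<lambda>x. \<phi> x * bessel_J \<mu> (\<omega> * x ^ (r + 1)))) (cbox 0 b)"
    by (simp add: integrable_integral)
  have nonneg: "0 \<le> M * C"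
    using M[of 0] C[of 0] b by (intro mult_nonneg_nonneg) (auto intro: order_trans[OF norm_ge_zero])
  have bound: "cmod (\<phi> x * bessel_J \<mu> (\<omega> * x ^ (r + 1))) \<le> M * C" if "x \<in> cbox 0 b" for x
  proof -
    have x: "x \<in> {0..b}" using that by simp
    show ?thesis unfolding norm_mult using M[OF x] C[of "\<omega> * x ^ (r + 1)"] x \<omega>
      by (intro mult_mono) (auto intro: order_trans[OF norm_ge_zero])
  qed
  from has_integral_bound[OF nonneg integral bound] show ?thesis using b by simp
qed

text \<open>One more integration by parts writes \<open>\<omega>\<close> times the remainder as a boundary term and an integral against
  \<open>J\<^sub>\<nu>\<^sub>+\<^sub>N\<^sub>+\<^sub>1\<close>; both are bounded in \<open>\<omega>\<close> because \<open>J\<^sub>\<mu>\<close> is bounded on \<open>[0, \<infinity>)\<close> once \<open>Re \<mu> \<ge> 0\<close>.\<close>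
lemma hankel_remainder_bound:
  assumes b: "b > 0" and \<nu>: "Re \<nu> > - 1 / real (r + 1)" and \<phi>: "derivs_on b \<phi> D\<^sub>\<phi>"
  obtains K where "\<And>\<omega>. \<omega> > 0 \<Longrightarrow> cmod (hankel_remainder r b \<nu> \<phi> N \<omega>) \<le> K / \<omega>"
proof -
  define \<sigma> where "\<sigma> = sigma_hat r \<nu> b \<phi>"
  define \<mu> where "\<mu> = \<nu> + of_nat (Suc N)"
  have "Re \<nu> > - (1 / real (r + 1))" "1 / real (r + 1) \<le> 1" "Re \<mu> = Re \<nu> + 1 + real N"
    using \<nu> by (simp_all add: \<mu>_def)
  then have \<mu>_pos: "Re \<mu> > 0" by linarith
  obtain C where C: "C \<ge> 0" "\<And>t. t \<ge> 0 \<Longrightarrow> cmod (bessel_J \<mu> t) \<le> C"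
    using bessel_J_bounded[of \<mu>] \<mu>_pos by auto
  obtain D where "derivs_on b (\<sigma> (Suc N)) D" using sigma_hat_derivs_on[OF b \<phi>] unfolding \<sigma>_def by blast
  then have \<sigma>_cont: "continuous_on {0..b} (\<sigma> (Suc N))" by (rule derivs_on_continuous_fun)
  obtain M where M: "\<And>x. x \<in> {0..b} \<Longrightarrow> cmod (\<sigma> (Suc N) x) \<le> M"
    using continuous_on_compact_bound[OF compact_Icc \<sigma>_cont] by blast
  define c where "c = (\<sigma> N b - taylorT r b (\<sigma> N) b 0) / complex_of_real (real (r + 1) * b ^ r)"
  show ?thesis
  proof (rule that)
    fix \<omega> :: real assume \<omega>: "\<omega> > 0"
    have "of_real \<omega> * hankel_remainder r b \<nu> \<phi> N \<omega>
        = c * bessel_J \<mu> (\<omega> * b ^ (r + 1)) - integral {0..b} (\<lambda>x. \<sigma> (Suc N) x * bessel_J \<mu> (\<omega> * x ^ (r + 1)))"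
      using hankel_remainder_recursion[OF b \<omega> integrability_exponent_shift[OF \<nu>] \<phi>]
      unfolding c_def \<sigma>_def \<mu>_def by simp
    also have "cmod \<dots> \<le> cmod c * C + M * C * b"
    proof (rule norm_triangle_le_diff[OF add_mono])
      show "cmod (c * bessel_J \<mu> (\<omega> * b ^ (r + 1))) \<le> cmod c * C"
        unfolding norm_mult using C(2)[of "\<omega> * b ^ (r + 1)"] \<omega> b by (simp add: mult_left_mono)
      show "cmod (integral {0..b} (\<lambda>x. \<sigma> (Suc N) x * bessel_J \<mu> (\<omega> * x ^ (r + 1)))) \<le> M * C * b"
        by (rule norm_integral_bessel_le[OF b \<omega> \<mu>_pos \<sigma>_cont M C(2)])
    qed
    finally show "cmod (hankel_remainder r b \<nu> \<phi> N \<omega>) \<le> (cmod c * C + M * C * b) / \<omega>"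
      using \<omega> by (simp add: norm_mult field_simps)
  qed
qed

lemma hankel_asymptotic_expansion:
  assumes b: "b > 0" and \<nu>: "Re \<nu> > - 1 / real (r + 1)" and \<phi>: "derivs_on b \<phi> D\<^sub>\<phi>"
  shows "(\<lambda>\<omega>. hankelH r b \<nu> \<phi> \<omega>
       - (\<Sum>k\<le>N. (1 / (- complex_of_real \<omega>) ^ k) *
            ((\<Sum>j\<le>r. (dI b ^^ j) (sigma_hat r \<nu> b \<phi> k) 0 / fact j * momentM r b j (\<nu> + of_nat k) \<omega>)
             - (if k = 0 then 0 else
                  (sigma_hat r \<nu> b \<phi> (k - 1) b - taylorT r b (sigma_hat r \<nu> b \<phi> (k - 1)) b 0)
                  * bessel_J (\<nu> + of_nat k) (\<omega> * b ^ (r + 1))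
                  / complex_of_real (real (r + 1) * b ^ r)))))
    \<in> O[at_top](\<lambda>\<omega>. complex_of_real (1 / \<omega> ^ Suc N))" (is "?E \<in> _")
proof -
  obtain K where K: "\<And>\<omega>. \<omega> > 0 \<Longrightarrow> cmod (hankel_remainder r b \<nu> \<phi> N \<omega>) \<le> K / \<omega>"
    using hankel_remainder_bound[OF b \<nu> \<phi>, where N = N] by metis
  show ?thesis
  proof (rule bigoI[where c = K], rule eventually_mono[OF eventually_gt_at_top[of 0]])
    fix \<omega> :: real assume \<omega>: "\<omega> > 0"
    have "norm (?E \<omega>) = cmod (hankel_remainder r b \<nu> \<phi> N \<omega>) / \<omega> ^ N"
      unfolding hankel_expansion_eq_remainder[OF b \<nu> \<phi> \<omega>] using \<omega> by (simp add: norm_divide norm_power)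
    also have "\<dots> \<le> K / \<omega> / \<omega> ^ N"
      using K[OF \<omega>] \<omega> by (intro divide_right_mono) auto
    also have "\<dots> = K * (1 / \<omega> ^ Suc N)"
      using \<omega> by (simp add: field_simps)
    also have "1 / \<omega> ^ Suc N = norm (complex_of_real (1 / \<omega> ^ Suc N))"
      using \<omega> by (simp only: norm_of_real) simp
    finally show "norm (?E \<omega>) \<le> K * norm (complex_of_real (1 / \<omega> ^ Suc N))" .
  qed
qed

theorem corollary3p3:
  fixes r :: nat and \<nu> :: complex and b :: real and f :: "real \<Rightarrow> real"
  assumes "r \<ge> 1"
    and "Re \<nu> > - 1 / real (r + 1)"
    and "b > 0"
    and "Cinf_on_interval 0 b f"
  shows "\<forall>N::nat.
    (\<lambda>\<omega>. hankelH r b \<nu> (\<lambda>x. complex_of_real (f x)) \<omega>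
       - (\<Sum>k\<le>N. (1 / (- complex_of_real \<omega>) ^ k) *
            ((\<Sum>j\<le>r. (dI b ^^ j) (sigma_hat r \<nu> b (\<lambda>x. complex_of_real (f x)) k) 0 / fact j
                        * momentM r b j (\<nu> + of_nat k) \<omega>)
             - (if k = 0 then 0 else
                  (sigma_hat r \<nu> b (\<lambda>x. complex_of_real (f x)) (k - 1) b
                     - taylorT r b (sigma_hat r \<nu> b (\<lambda>x. complex_of_real (f x)) (k - 1)) b 0)
                  * bessel_J (\<nu> + of_nat k) (\<omega> * b ^ (r + 1))
                  / complex_of_real (real (r + 1) * b ^ r)))))
    \<in> O[at_top](\<lambda>\<omega>. complex_of_real (1 / \<omega> ^ Suc N))"
proof -
  obtain D where "derivs_on b (\<lambda>x. complex_of_real (f x)) D"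
    using Cinf_on_interval_derivs_on[OF assms(4)] .
  from hankel_asymptotic_expansion[OF assms(3) assms(2) this] show ?thesis by blast
qed

end
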